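(* Let $H$ be a definite Hamiltonian on $(a,b)$ in the limit circle case. Further, let $c>0$, set $r_0 := \bigl(\frac{c}{\det\Omega(a,b)}\bigr)^{\frac 12}$, let $(\hat t,\hat s)$ be the unique compatible pair for $H,r_0$ with constants $c,c$, let $K_H(t;r)$ be the corresponding kernel and $\kappa_H(r)$ be produced by the algorithm below. Then \[ \log 2\cdot\kappa_H(r)-\bigl(\log r+O(1)\bigr) \le \int_a^b K_H(t;r)\,\mathrm{d}t \le 2e\cdot\kappa_H(r)\bigl(\log r+O(1)\bigr) \] for $r>r_0$. The expressions $O(1)$ depend only on $c$ and $\operatorname{tr}\Omega(a,b)$; explicitly, \[ \int_a^b K_H(t;r)\,\mathrm{d}t\ge \kappa_H(r)\log 2-\Bigl[\log r+\log\frac{2\operatorname{tr}\Omega(a,b)}{\sqrt c}\Bigr],\qquad \int_a^b K_H(t;r)\,\mathrm{d}t\le 2e\kappa_H(r)\Bigl[\log r+\log\frac{\operatorname{tr}\Omega(a,b)}{2\sqrt c}+1\Bigr]. \]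
   Context: Let $-\infty<a<b\le\infty$. A Hamiltonian on $(a,b)$ is a measurable $H:(a,b)\to\mathbb{R}^{2\times 2}$, locally integrable on $(a,c)$ for $c<b$, with $H(t)\ge0$ a.e. and $\{H=0\}$ null; $H=\begin{pmatrix}h_1&h_3\\ h_3&h_2\end{pmatrix}$. It is in the limit circle case if $\int_a^b\operatorname{tr}H<\infty$, and definite if there is no $\phi$ with $H(t)=\operatorname{tr}H(t)\,\xi_\phi\xi_\phi^T$ a.e. on $(a,b)$, $\xi_\phi=(\cos\phi,\sin\phi)^T$. Set $\Omega(s,t)=\int_s^tH(u)\,\mathrm{d}u$, $\omega_j(s,t)=\int_s^th_j$. The (unique) compatible pair $(\hat t,\hat s)$ for $H,r_0$ with constants $c,c$ is given by $\det\Omega(a,\hat t(r))=\frac{c}{r^2}$ for $r>r_0$ and $\det\Omega(\hat s(t;r),t)=\frac{c}{r^2}$, $\hat s(t;r)\le t$, for $t\ge\hat t(r)$. Kernel: $K_H(t;r):=\mathbf{1}_{[a,\hat t(r))}(t)\frac{\omega_2(a,t)h_1(t)}{\frac{c}{r^2}+(\omega_3(a,t))^2}+\mathbf{1}_{[\hat t(r),b)}(t)\frac{h_1(t)}{\omega_1(\hat s(t;r),t)}$. Algorithm: for $r>0$ set $\sigma_0^{(r)}:=a$; if $\det\Omega(\sigma_{j-1}^{(r)},b)>\frac{c}{r^2}$, let $\sigma_j^{(r)}\in(\sigma_{j-1}^{(r)},b)$ be the unique point with $\det\Omega(\sigma_{j-1}^{(r)},\sigma_j^{(r)})=\frac{c}{r^2}$;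 otherwise set $\sigma_j^{(r)}:=b$ and $\kappa_H(r):=j$ and stop. *)

theory Defs
  imports "HOL-Analysis.Analysis"
begin

text \<open>A Hamiltonian H = [[h1,h3],[h3,h2]] on the interval (a,b), with a real and
  b an extended real (b may be +infinity). Its entries are given as three real functions.\<close>

definition hdom :: "real \<Rightarrow> ereal \<Rightarrow> real set" where
  "hdom a b = {t. a < t \<and> ereal t < b}"

definition is_hamiltonian ::
  "real \<Rightarrow> ereal \<Rightarrow> (real \<Rightarrow> real) \<Rightarrow> (real \<Rightarrow> real) \<Rightarrow> (real \<Rightarrow> real) \<Rightarrow> bool" where
  "is_hamiltonian a b h1 h2 h3 \<longleftrightarrow>
     ereal a < b \<and>
     set_borel_measurable lborel (hdom a b) h1 \<and>
     set_borel_measurable lborel (hdom a b) h2 \<and>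
     set_borel_measurable lborel (hdom a b) h3 \<and>
     (\<forall>c. a < c \<and> ereal c < b \<longrightarrow>
        set_integrable lborel {a<..<c} h1 \<and> set_integrable lborel {a<..<c} h2 \<and>
        set_integrable lborel {a<..<c} h3) \<and>
     (AE t in lborel. t \<in> hdom a b \<longrightarrow>
        0 \<le> h1 t \<and> 0 \<le> h2 t \<and> 0 \<le> h1 t * h2 t - (h3 t)\<^sup>2) \<and>
     {t \<in> hdom a b. h1 t = 0 \<and> h2 t = 0 \<and> h3 t = 0} \<in> null_sets lborel"

definition limit_circle ::
  "real \<Rightarrow> ereal \<Rightarrow> (real \<Rightarrow> real) \<Rightarrow> (real \<Rightarrow> real) \<Rightarrow> bool" where
  "limit_circle a b h1 h2 \<longleftrightarrow> (\<integral>\<^sup>+ t\<in>hdom a b. ennreal (h1 t + h2 t) \<partial>lborel) < \<infinity>"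

definition definite_ham ::
  "real \<Rightarrow> ereal \<Rightarrow> (real \<Rightarrow> real) \<Rightarrow> (real \<Rightarrow> real) \<Rightarrow> (real \<Rightarrow> real) \<Rightarrow> bool" where
  "definite_ham a b h1 h2 h3 \<longleftrightarrow>
     \<not> (\<exists>\<phi>::real. AE t in lborel. t \<in> hdom a b \<longrightarrow>
          h1 t = (h1 t + h2 t) * (cos \<phi>)\<^sup>2 \<and>
          h2 t = (h1 t + h2 t) * (sin \<phi>)\<^sup>2 \<and>
          h3 t = (h1 t + h2 t) * (cos \<phi> * sin \<phi>))"

definition omg :: "(real \<Rightarrow> real) \<Rightarrow> ereal \<Rightarrow> ereal \<Rightarrow> real" where
  "omg h s t = (LINT u:{u. s < ereal u \<and> ereal u < t}|lborel. h u)"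

definition detOm ::
  "(real \<Rightarrow> real) \<Rightarrow> (real \<Rightarrow> real) \<Rightarrow> (real \<Rightarrow> real) \<Rightarrow> ereal \<Rightarrow> ereal \<Rightarrow> real" where
  "detOm h1 h2 h3 s t = omg h1 s t * omg h2 s t - (omg h3 s t)\<^sup>2"

definition that_fn ::
  "real \<Rightarrow> ereal \<Rightarrow> (real \<Rightarrow> real) \<Rightarrow> (real \<Rightarrow> real) \<Rightarrow> (real \<Rightarrow> real) \<Rightarrow> real \<Rightarrow> real \<Rightarrow> real" where
  "that_fn a b h1 h2 h3 c r =
     (THE t. a < t \<and> ereal t < b \<and> detOm h1 h2 h3 (ereal a) (ereal t) = c / r\<^sup>2)"

definition shat_fn ::
  "real \<Rightarrow> (real \<Rightarrow> real) \<Rightarrow> (real \<Rightarrow> real) \<Rightarrow> (real \<Rightarrow> real) \<Rightarrow> real \<Rightarrow> real \<Rightarrow> real \<Rightarrow> real" where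
  "shat_fn a h1 h2 h3 c t r =
     (THE s. a \<le> s \<and> s \<le> t \<and> detOm h1 h2 h3 (ereal s) (ereal t) = c / r\<^sup>2)"

definition kernelH ::
  "real \<Rightarrow> ereal \<Rightarrow> (real \<Rightarrow> real) \<Rightarrow> (real \<Rightarrow> real) \<Rightarrow> (real \<Rightarrow> real) \<Rightarrow> real \<Rightarrow> real \<Rightarrow> real \<Rightarrow> real" where
  "kernelH a b h1 h2 h3 c t r =
     (if t < that_fn a b h1 h2 h3 c r
      then omg h2 (ereal a) (ereal t) * h1 t / (c / r\<^sup>2 + (omg h3 (ereal a) (ereal t))\<^sup>2)
      else h1 t / omg h1 (ereal (shat_fn a h1 h2 h3 c t r)) (ereal t))"

fun sigma_seq ::
  "real \<Rightarrow> ereal \<Rightarrow> (real \<Rightarrow> real) \<Rightarrow> (real \<Rightarrow> real) \<Rightarrow> (real \<Rightarrow> real) \<Rightarrow> real \<Rightarrow> real \<Rightarrow> nat \<Rightarrow> ereal" where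
  "sigma_seq a b h1 h2 h3 c r 0 = ereal a"
| "sigma_seq a b h1 h2 h3 c r (Suc j) =
     (let s = sigma_seq a b h1 h2 h3 c r j in
      if detOm h1 h2 h3 s b > c / r\<^sup>2
      then ereal (THE x. s < ereal x \<and> ereal x < b \<and> detOm h1 h2 h3 s (ereal x) = c / r\<^sup>2)
      else b)"

definition kappaH ::
  "real \<Rightarrow> ereal \<Rightarrow> (real \<Rightarrow> real) \<Rightarrow> (real \<Rightarrow> real) \<Rightarrow> (real \<Rightarrow> real) \<Rightarrow> real \<Rightarrow> real \<Rightarrow> nat" where
  "kappaH a b h1 h2 h3 c r = (LEAST j. j \<ge> 1 \<and> sigma_seq a b h1 h2 h3 c r j = b)"

end

theory Submission
  imports Defs
begin

text \<open>
  The matrix \<open>\<Omega>(s, t)\<close> is the integral of a positive semidefinite matrix function, so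
  \<open>det \<Omega>\<close> is superadditive under splitting \<open>[s, t]\<close>, and definiteness together with
  \<open>tr H > 0\<close> makes it strictly monotone in both endpoints. Hence \<open>t_hat\<close>, \<open>s_hat\<close> and
  the points \<open>\<sigma>\<^sub>j\<close> are well defined, and the algorithm stops because every step
  uses up at least \<open>2 sqrt c / r\<close> of \<open>tr \<Omega>(a, b)\<close>.

  On the piece \<open>(\<sigma>\<^sub>j, \<sigma>\<^sub>j\<^sub>+\<^sub>1)\<close> the kernel lies between
  \<open>h\<^sub>1(t) / \<omega>\<^sub>1(\<sigma>\<^sub>j\<^sub>-\<^sub>1, t)\<close> (for \<open>j \<ge> 1\<close>) and
  \<open>h\<^sub>1(t) / max(m, \<omega>\<^sub>1(\<sigma>\<^sub>j, t))\<close> with \<open>m = (c / r\<^sup>2) / tr \<Omega>(a, b)\<close>.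
  The substitution \<open>v = \<omega>\<^sub>1(s, t)\<close> turns both bounds into integrals of \<open>dv / v\<close>:
  each piece contributes at most \<open>1 + log (tr \<Omega>(a, b) / m) = 2 log r + O(1)\<close>, and the
  lower bounds add up to \<open>\<Sum> log ((x\<^sub>i + x\<^sub>i\<^sub>+\<^sub>1) / x\<^sub>i)\<close> with
  \<open>x\<^sub>i = \<omega>\<^sub>1(\<sigma>\<^sub>i, \<sigma>\<^sub>i\<^sub>+\<^sub>1)\<close>, which AM-GM bounds by
  \<open>(\<kappa> - 2) log 2 + (log x\<^sub>\<kappa>\<^sub>-\<^sub>2 - log x\<^sub>0) / 2\<close>.
\<close>

section \<open>Integrals of the Hamiltonian entries\<close>

lemma set_integrable_of_integrable:
  fixes f :: "'a \<Rightarrow> 'b::{banach, second_countable_topology}"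
  assumes "integrable M f" "A \<in> sets M"
  shows "set_integrable M A f"
  unfolding set_integrable_def using integrable_mult_indicator[OF assms(2,1)] .

lemma omg_eq_set_integral: "omg f s t = (LINT u:einterval s t|lborel. f u)"
  by (simp add: omg_def einterval_def)

lemma hdom_eq_einterval: "hdom a b = einterval (ereal a) b"
  by (auto simp: hdom_def einterval_def)

lemma omg_empty:
  assumes "t \<le> s"
  shows "omg f s t = 0"
proof -
  have "einterval s t = {}"
    using assms by (auto simp: einterval_def)
  then show ?thesis
    by (simp add: omg_eq_set_integral set_lebesgue_integral_def)
qed

lemma omg_eq_interval_integral: "s \<le> t \<Longrightarrow> omg f s t = (LBINT x=s..t. f x)"
  by (simp add: omg_eq_set_integral interval_lebesgue_integral_def)

lemma omg_split:
  assumes f: "integrable lborel f" and "s \<le> u" "u \<le> t"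
  shows "omg f s t = omg f s u + omg f u t"
proof -
  have "interval_lebesgue_integrable lborel (min s (min u t)) (max s (max u t)) f"
    using f by (simp add: interval_lebesgue_integrable_def set_integrable_of_integrable)
  then have "(LBINT x=s..u. f x) + (LBINT x=u..t. f x) = (LBINT x=s..t. f x)"
    by (rule interval_integral_sum)
  then show ?thesis
    using assms by (simp add: omg_eq_interval_integral)
qed

lemma omg_nonneg:
  assumes "AE x in lborel. 0 \<le> f x"
  shows "0 \<le> omg f s t"
  unfolding omg_eq_set_integral set_lebesgue_integral_def
  by (rule integral_nonneg_AE) (use assms in \<open>auto split: split_indicator\<close>)

lemma omg_eq_0_imp_AE_zero:
  assumes f: "integrable lborel f" and nn: "AE x in lborel. 0 \<le> f x" and "omg f s t = 0"
  shows "AE x in lborel. x \<in> einterval s t \<longrightarrow> f x = 0"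
proof -
  have "integrable lborel (\<lambda>x. indicator (einterval s t) x * f x)"
    using set_integrable_of_integrable[OF f, of "einterval s t"] by (simp add: set_integrable_def)
  moreover have "AE x in lborel. 0 \<le> indicator (einterval s t) x * f x"
    using nn by eventually_elim (simp split: split_indicator)
  moreover have "(\<integral>x. indicator (einterval s t) x * f x \<partial>lborel) = 0"
    using assms(3) by (simp add: omg_eq_set_integral set_lebesgue_integral_def)
  ultimately have "AE x in lborel. indicator (einterval s t) x * f x = 0"
    using integral_nonneg_eq_0_iff_AE by blast
  then show ?thesis
    by eventually_elim (auto split: split_indicator)
qed

lemma omg_linear:
  assumes "integrable lborel f" "integrable lborel g"
  shows "omg (\<lambda>x. p * f x + q * g x) s t = p * omg f s t + q * omg g s t"
proof -
  have "set_integrable lborel (einterval s t) f" "set_integrable lborel (einterval s t) g"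
    using assms by (auto simp: set_integrable_of_integrable)
  then show ?thesis
    unfolding omg_eq_set_integral by (simp add: set_integral_add set_integrable_mult_right)
qed

lemma omg_mono:
  assumes f: "integrable lborel f" and nn: "AE x in lborel. 0 \<le> f x" and "u \<le> t"
  shows "omg f s u \<le> omg f s t"
proof (cases "s \<le> u")
  case True
  then show ?thesis
    using omg_split[OF f True \<open>u \<le> t\<close>] omg_nonneg[OF nn, of u t] by simp
next
  case False
  then show ?thesis
    using omg_empty[of u s f] omg_nonneg[OF nn] by simp
qed

lemma mono_omg:
  assumes "integrable lborel f" "AE x in lborel. 0 \<le> f x"
  shows "mono (\<lambda>u. omg f s (ereal u))"
  by (rule monoI) (simp add: omg_mono[OF assms])

lemma omg_le_omg:
  assumes f: "integrable lborel f" and nn: "AE x in lborel. 0 \<le> f x"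
    and "s \<le> s'" "s' \<le> t'" "t' \<le> t"
  shows "omg f s' t' \<le> omg f s t"
proof -
  have "omg f s' t' \<le> omg f s' t"
    using omg_mono[OF f nn \<open>t' \<le> t\<close>] .
  also have "\<dots> \<le> omg f s t"
    using omg_split[OF f \<open>s \<le> s'\<close>, of t] omg_nonneg[OF nn, of s s'] assms(3-5) by simp
  finally show ?thesis .
qed

lemma continuous_on_omg:
  assumes f: "integrable lborel f"
  shows "continuous_on {s..q} (\<lambda>t. omg f (ereal s) (ereal t))"
proof -
  have "f integrable_on {s..q}"
    using f by (meson integrable_on_lborel integrable_on_subinterval subset_UNIV)
  then have cont: "continuous_on {s..q} (\<lambda>t. integral {s..t} f)"
    by (rule indefinite_integral_continuous_1)
  have eq: "omg f (ereal s) (ereal t) = integral {s..t} f" if "t \<in> {s..q}" for t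
  proof -
    have "set_integrable lborel {s..t} f"
      using f by (auto simp: set_integrable_of_integrable)
    then show ?thesis
      using that by (simp add: omg_eq_interval_integral interval_integral_eq_integral)
  qed
  show ?thesis
    using continuous_on_eq[OF cont eq[symmetric]] .
qed

lemma omg_approx_from_below:
  assumes "ereal s < t"
  obtains X :: "nat \<Rightarrow> real" where "\<And>i. s < X i" "\<And>i. ereal (X i) < t"
    "\<And>f. integrable lborel f \<Longrightarrow> (\<lambda>i. omg f (ereal s) (ereal (X i))) \<longlonglongrightarrow> omg f (ereal s) t"
proof -
  obtain X :: "nat \<Rightarrow> real" where X: "incseq X" "\<And>i. ereal s < X i" "\<And>i. X i < t"
    "(\<lambda>i. ereal (X i)) \<longlonglongrightarrow> t"
    using ereal_incseq_approx[OF assms] by blast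
  have union: "(\<Union>i. einterval s (X i)) = einterval s t"
  proof safe
    fix x i
    assume "x \<in> einterval (ereal s) (ereal (X i))"
    then show "x \<in> einterval s t"
      using X(3)[of i]
      by (auto simp: einterval_def intro: order.strict_trans[of "ereal x" "ereal (X i)"])
  next
    fix x
    assume "x \<in> einterval s t"
    then have "s < x" "ereal x < t"
      by (auto simp: einterval_def)
    with order_tendstoD(1)[OF X(4) \<open>ereal x < t\<close>] obtain i where "x < X i"
      by (auto simp: eventually_sequentially)
    then show "x \<in> (\<Union>i. einterval (ereal s) (ereal (X i)))"
      using \<open>s < x\<close> by (auto simp: einterval_def)
  qed
  have inc: "incseq (\<lambda>i. einterval (ereal s) (ereal (X i)))"
    using X(1) by (auto simp: incseq_def einterval_def intro: order.strict_trans2)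
  show ?thesis
  proof (rule that)
    show "s < X i" "ereal (X i) < t" for i
      using X(2,3)[of i] by simp_all
  next
    fix f :: "real \<Rightarrow> real"
    assume "integrable lborel f"
    then have "(\<lambda>i. LINT x:einterval (ereal s) (ereal (X i))|lborel. f x)
        \<longlonglongrightarrow> (LINT x:(\<Union>i. einterval (ereal s) (ereal (X i)))|lborel. f x)"
      by (intro set_integral_cont_up inc) (auto simp: set_integrable_of_integrable)
    then show "(\<lambda>i. omg f (ereal s) (ereal (X i))) \<longlonglongrightarrow> omg f (ereal s) t"
      unfolding union by (simp add: omg_eq_set_integral)
  qed
qed

lemma nn_integral_omg:
  assumes f: "integrable lborel f" and nn: "AE x in lborel. 0 \<le> f x"
  shows "(\<integral>\<^sup>+u. ennreal (f u) * indicator (einterval s t) u \<partial>lborel) = ennreal (omg f s t)"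
proof -
  have "(\<integral>\<^sup>+u. ennreal (f u) * indicator (einterval s t) u \<partial>lborel)
      = (\<integral>\<^sup>+u. ennreal (indicator (einterval s t) u * f u) \<partial>lborel)"
    by (rule nn_integral_cong) (auto split: split_indicator)
  also have "\<dots> = ennreal (\<integral>u. indicator (einterval s t) u * f u \<partial>lborel)"
    using f nn set_integrable_of_integrable[OF f, of "einterval s t"]
    by (intro nn_integral_eq_integral) (auto simp: set_integrable_def split: split_indicator)
  finally show ?thesis
    by (simp add: omg_eq_set_integral set_lebesgue_integral_def)
qed

lemma continuous_mono_on_last_level:
  fixes F :: "real \<Rightarrow> real"
  assumes "s \<le> w" and cont: "continuous_on {s..w} F" and mono: "mono_on {s..w} F"
    and "F s \<le> x" "x < F w"
  obtains y where "s \<le> y" "y \<le> w" "F y = x" "\<And>u. u \<in> {s..w} \<Longrightarrow> x < F u \<longleftrightarrow> y < u"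
proof -
  define S where "S = {u \<in> {s..w}. F u \<le> x}"
  have S_bdd: "bdd_above S"
    by (auto simp: S_def intro: bdd_aboveI[of _ w])
  have "closed S"
    unfolding S_def using cont by (intro continuous_on_closed_Collect_le) auto
  moreover have "s \<in> S"
    using assms(1,4) by (simp add: S_def)
  ultimately have "Sup S \<in> S"
    using S_bdd by (intro closed_contains_Sup) auto
  define y where "y = Sup S"
  have y: "s \<le> y" "y \<le> w" "F y \<le> x"
    using \<open>Sup S \<in> S\<close> by (auto simp: S_def y_def)
  have above_y: "u \<le> y" if "u \<in> S" for u
    unfolding y_def using that S_bdd by (rule cSup_upper)
  obtain z where z: "s \<le> z" "z \<le> w" "F z = x"
    using IVT'[of F s x w] assms by (auto dest: order.strict_implies_order)
  then have "F y = x"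
    using y above_y[of z] mono_onD[OF mono, of z y] by (auto simp: S_def)
  moreover have "x < F u \<longleftrightarrow> y < u" if "u \<in> {s..w}" for u
    using that above_y[of u] mono_onD[OF mono, of u y] y \<open>F y = x\<close> by (force simp: S_def)
  ultimately show ?thesis
    using y that by blast
qed

lemma omg_level_point:
  fixes f :: "real \<Rightarrow> real"
  assumes f: "integrable lborel f" and nn: "AE x in lborel. 0 \<le> f x"
    and "s0 \<le> s" "ereal s < t" "omg f s0 s \<le> x" "x < omg f s0 t"
  obtains y where "s \<le> y" "ereal y < t" "omg f s0 y = x"
    "\<And>u. u \<in> einterval s t \<Longrightarrow> x < omg f s0 u \<longleftrightarrow> y < u"
proof -
  define F where "F u = omg f (ereal s0) (ereal u)" for u
  have F_mono: "F u \<le> F v" if "u \<le> v" for u v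
    using omg_mono[OF f nn] that by (simp add: F_def)
  have "ereal s0 < t"
    using assms(3,4) by (meson ereal_less_eq(3) order.strict_trans1)
  then obtain X where X: "\<And>i. ereal (X i) < t"
    "(\<lambda>i. omg f (ereal s0) (ereal (X i))) \<longlonglongrightarrow> omg f (ereal s0) t"
    using omg_approx_from_below f by metis
  from order_tendstoD(1)[OF X(2) \<open>x < omg f s0 t\<close>] obtain i where "x < F (X i)"
    by (auto simp: F_def eventually_sequentially)
  define w where "w = max s (X i)"
  have w: "ereal w < t" "x < F w"
    using X(1)[of i] assms(4) \<open>x < F (X i)\<close> F_mono[of "X i" w] by (auto simp: w_def)
  have "s \<le> w" "F s \<le> x"
    using assms(5) by (simp_all add: w_def F_def)
  moreover have "continuous_on {s..w} F"
    unfolding F_def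
    by (rule continuous_on_subset[OF continuous_on_omg[OF f, of s0 w]]) (use assms(3) in auto)
  moreover have "mono_on {s..w} F"
    using F_mono by (auto intro: mono_onI)
  ultimately obtain y where y: "s \<le> y" "y \<le> w" "F y = x" "\<And>u. u \<in> {s..w} \<Longrightarrow> x < F u \<longleftrightarrow> y < u"
    using continuous_mono_on_last_level[of s w F x] w(2) by blast
  show ?thesis
  proof (rule that)
    show "s \<le> y" "omg f s0 y = x"
      using y by (auto simp: F_def)
    show "ereal y < t"
      using y(2) w(1) by (meson ereal_less_eq(3) le_less_trans)
    show "x < omg f s0 u \<longleftrightarrow> y < u" if "u \<in> einterval s t" for u
    proof (cases "u \<le> w")
      case True
      then show ?thesis
        using that y(4)[of u] by (auto simp: F_def einterval_def)
    next
      case False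
      then show ?thesis
        using y(2) w(2) F_mono[of w u] by (auto simp: F_def)
    qed
  qed
qed

lemma nn_integral_omg_superlevel:
  fixes f :: "real \<Rightarrow> real"
  assumes f: "integrable lborel f" and nn: "AE x in lborel. 0 \<le> f x"
    and "s0 \<le> s" "ereal s < t"
  shows "(\<integral>\<^sup>+u. ennreal (f u) * indicator (einterval s t) u
             * indicator {u. x < omg f s0 (ereal u)} u \<partial>lborel)
       = ennreal (omg f s0 t - max (omg f s0 s) x)"
proof -
  let ?I = "\<integral>\<^sup>+u. ennreal (f u) * indicator (einterval s t) u
      * indicator {u. x < omg f s0 (ereal u)} u \<partial>lborel"
  have from_threshold: "?I = ennreal (omg f s0 t - omg f s0 y)"
    if y: "s \<le> y" "ereal y \<le> t" and iff: "\<And>u. u \<in> einterval s t \<Longrightarrow> x < omg f s0 u \<longleftrightarrow> y < u"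
    for y
  proof -
    have "?I = (\<integral>\<^sup>+u. ennreal (f u) * indicator (einterval y t) u \<partial>lborel)"
      using iff y by (intro nn_integral_cong) (auto simp: einterval_def split: split_indicator)
    also have "\<dots> = ennreal (omg f y t)"
      by (rule nn_integral_omg[OF f nn])
    also have "omg f y t = omg f s0 t - omg f s0 y"
      using omg_split[OF f, of s0 y t] y assms(3) by simp
    finally show ?thesis .
  qed
  have primitive_mono: "omg f s0 u \<le> omg f s0 v" if "u \<le> v" for u v
    by (rule omg_mono[OF f nn that])
  consider "x < omg f s0 s" | "omg f s0 t \<le> x" | "omg f s0 s \<le> x" "x < omg f s0 t"
    by linarith
  then show ?thesis
  proof cases
    case 1
    have "?I = ennreal (omg f s0 t - omg f s0 s)"
      using assms(4) 1 primitive_mono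
      by (intro from_threshold) (auto simp: einterval_def intro: less_le_trans)
    then show ?thesis
      using 1 by simp
  next
    case 2
    have "\<not> x < omg f s0 (ereal u)" if "ereal u < t" for u
      using primitive_mono[of "ereal u" t] that 2 by (simp add: less_imp_le)
    then have "?I = (\<integral>\<^sup>+u. 0 \<partial>(lborel :: real measure))"
      by (intro nn_integral_cong) (auto simp: einterval_def split: split_indicator)
    then show ?thesis
      using 2 primitive_mono[of s t] assms(4) by (simp add: ennreal_neg)
  next
    case 3
    then obtain y where "s \<le> y" "ereal y < t" "omg f s0 y = x"
      "\<And>u. u \<in> einterval s t \<Longrightarrow> x < omg f s0 u \<longleftrightarrow> y < u"
      using omg_level_point[OF f nn assms(3,4)] by blast
    then show ?thesis
      using from_threshold[of y] 3 by simp
  qed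
qed

lemma distr_density_omg:
  fixes f :: "real \<Rightarrow> real"
  assumes f: "integrable lborel f" and nn: "AE x in lborel. 0 \<le> f x" and "s0 \<le> s" "ereal s < t"
  shows "distr (density lborel (\<lambda>u. ennreal (f u) * indicator (einterval s t) u)) borel
           (\<lambda>u. omg f s0 (ereal u))
       = density lborel (indicator {omg f s0 s <..< omg f s0 t})"
    (is "distr ?M borel ?F = density lborel (indicator {?a <..< ?b})")
proof (rule measure_eqI_lessThan)
  have F_meas[measurable]: "?F \<in> borel_measurable borel"
    by (rule borel_measurable_mono[OF mono_omg[OF f nn]])
  have [measurable]: "f \<in> borel_measurable borel"
    using f by (simp add: borel_measurable_integrable)
  fix x
  have "emeasure (distr ?M borel ?F) {x<..} = emeasure ?M (?F -` {x<..})"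
    by (subst emeasure_distr) simp_all
  also have "\<dots> = (\<integral>\<^sup>+u. ennreal (f u) * indicator (einterval s t) u
      * indicator (?F -` {x<..}) u \<partial>lborel)"
    using measurable_sets[OF F_meas, of "{x<..}"] by (intro emeasure_density) auto
  also have "\<dots> = ennreal (?b - max ?a x)"
    using nn_integral_omg_superlevel[OF f nn assms(3,4), of x] by (simp add: indicator_def vimage_def)
  finally have distr_Ioi: "emeasure (distr ?M borel ?F) {x<..} = ennreal (?b - max ?a x)" .
  then show "emeasure (distr ?M borel ?F) {x<..} < \<infinity>"
    by simp
  have "emeasure (density lborel (indicator {?a <..< ?b})) {x<..}
      = (\<integral>\<^sup>+v. indicator {?a <..< ?b} v * indicator {x<..} v \<partial>lborel)"
    by (rule emeasure_density) auto
  also have "\<dots> = (\<integral>\<^sup>+v. indicator {max ?a x <..< ?b} v \<partial>lborel)"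
    by (rule nn_integral_cong) (auto split: split_indicator)
  also have "\<dots> = ennreal (?b - max ?a x)"
    by (cases "max ?a x \<le> ?b") (auto simp: ennreal_neg)
  finally show "emeasure (distr ?M borel ?F) {x<..}
      = emeasure (density lborel (indicator {?a <..< ?b})) {x<..}"
    using distr_Ioi by simp
qed simp_all

lemma nn_integral_omg_substitution:
  fixes f :: "real \<Rightarrow> real" and g :: "real \<Rightarrow> ennreal"
  assumes f: "integrable lborel f" and nn: "AE x in lborel. 0 \<le> f x"
    and "s0 \<le> s" "ereal s < t" and g: "g \<in> borel_measurable borel"
  shows "(\<integral>\<^sup>+u. ennreal (f u) * g (omg f s0 u) * indicator (einterval s t) u \<partial>lborel) =
         (\<integral>\<^sup>+v. g v * indicator {omg f s0 s <..< omg f s0 t} v \<partial>lborel)"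
proof -
  let ?F = "\<lambda>u. omg f s0 (ereal u)"
  let ?M = "density lborel (\<lambda>u. ennreal (f u) * indicator (einterval s t) u)"
  have [measurable]: "?F \<in> borel_measurable borel" "f \<in> borel_measurable borel"
    using borel_measurable_mono[OF mono_omg[OF f nn]] f by (simp_all add: borel_measurable_integrable)
  have "(\<integral>\<^sup>+u. ennreal (f u) * g (?F u) * indicator (einterval s t) u \<partial>lborel) = (\<integral>\<^sup>+u. g (?F u) \<partial>?M)"
    using g by (subst nn_integral_density) (auto simp: mult_ac)
  also have "\<dots> = (\<integral>\<^sup>+v. g v \<partial>distr ?M borel ?F)"
    using g by (subst nn_integral_distr) auto
  also have "\<dots> = (\<integral>\<^sup>+v. indicator {omg f s0 s <..< omg f s0 t} v * g v \<partial>lborel)"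
    unfolding distr_density_omg[OF assms(1-4)] using g by (subst nn_integral_density) auto
  finally show ?thesis
    by (simp add: mult_ac)
qed

lemma nn_integral_inverse_Ioo:
  fixes p q :: real
  assumes "0 < p" "p \<le> q"
  shows "(\<integral>\<^sup>+v. ennreal (1 / v) * indicator {p<..<q} v \<partial>lborel) = ennreal (ln q - ln p)"
proof -
  have "AE v in lborel. v \<notin> {p, q}"
    by (rule AE_not_in) (simp add: finite_imp_null_set_lborel)
  then have "AE v in lborel.
      ennreal (1 / v) * indicator {p<..<q} v = ennreal (1 / v) * indicator {p..q} v"
    by eventually_elim (auto split: split_indicator)
  then have "(\<integral>\<^sup>+v. ennreal (1 / v) * indicator {p<..<q} v \<partial>lborel)
      = (\<integral>\<^sup>+v. ennreal (1 / v) * indicator {p..q} v \<partial>lborel)"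
    by (rule nn_integral_cong_AE)
  also have "\<dots> = ennreal (ln q - ln p)"
  proof (rule nn_integral_FTC_Icc)
    show "DERIV ln x :> 1 / x" if "x \<in> {p..q}" for x
      using that assms by (auto intro!: derivative_eq_intros)
  qed (use assms in \<open>auto simp: divide_inverse\<close>)
  finally show ?thesis .
qed

lemma nn_integral_inverse_max_le:
  fixes m U L :: real
  assumes "0 < m" "m \<le> U" "L \<le> U"
  shows "(\<integral>\<^sup>+v. ennreal (1 / max m v) * indicator {0<..<L} v \<partial>lborel) \<le> ennreal (1 + ln (U / m))"
proof -
  have "(\<integral>\<^sup>+v. ennreal (1 / max m v) * indicator {0<..<L} v \<partial>lborel)
      \<le> (\<integral>\<^sup>+v. ennreal (1 / m) * indicator {0..m} v + ennreal (1 / v) * indicator {m<..<U} v \<partial>lborel)"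
    using assms by (intro nn_integral_mono) (auto simp: max_def split: split_indicator)
  also have "\<dots> = ennreal (1 / m) * ennreal m + ennreal (ln U - ln m)"
    using assms
    by (subst nn_integral_add) (auto simp: nn_integral_cmult_indicator nn_integral_inverse_Ioo)
  also have "\<dots> = ennreal (1 + ln (U / m))"
    using assms ennreal_plus[of 1 "ln U - ln m"] by (simp add: ennreal_mult[symmetric] ln_div)
  finally show ?thesis .
qed

text \<open>AM-GM gives \<open>(x\<^sub>i + x\<^sub>i\<^sub>+\<^sub>1) / x\<^sub>i \<ge> 2 sqrt (x\<^sub>i\<^sub>+\<^sub>1 / x\<^sub>i)\<close>, and the square roots telescope.\<close>

lemma sum_ln_consecutive_ratio_ge:
  fixes x :: "nat \<Rightarrow> real"
  assumes "\<And>i. i \<le> n \<Longrightarrow> 0 < x i"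
  shows "real n * ln 2 + (ln (x n) - ln (x 0)) / 2 \<le> (\<Sum>i<n. ln (x i + x (Suc i)) - ln (x i))"
  using assms
proof (induction n)
  case (Suc n)
  have pos: "0 < x n" "0 < x (Suc n)"
    using Suc.prems by auto
  have "4 * (x n * x (Suc n)) \<le> (x n + x (Suc n))\<^sup>2"
    using zero_le_power2[of "x n - x (Suc n)"] by (simp add: algebra_simps power2_eq_square)
  then have "ln (4 * (x n * x (Suc n))) \<le> ln ((x n + x (Suc n))\<^sup>2)"
    using pos by (subst ln_le_cancel_iff) auto
  moreover have "ln (4::real) = 2 * ln 2"
    using ln_realpow[of 2 2] by simp
  ultimately have "ln 2 + (ln (x (Suc n)) - ln (x n)) / 2 \<le> ln (x n + x (Suc n)) - ln (x n)"
    using pos by (simp add: ln_mult ln_realpow field_simps)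
  then show ?case
    using Suc by (simp add: field_simps)
qed simp

section \<open>Positive semidefinite 2 \<times> 2 matrices\<close>

lemma psd2_quadratic_nonneg:
  fixes p q r x y :: real
  assumes "0 \<le> p" "0 \<le> q" "r\<^sup>2 \<le> p * q"
  shows "0 \<le> p * x\<^sup>2 + 2 * r * x * y + q * y\<^sup>2"
proof (cases "p = 0")
  case True
  then show ?thesis
    using assms by simp
next
  case False
  then have "0 < p"
    using assms by simp
  have "p * (p * x\<^sup>2 + 2 * r * x * y + q * y\<^sup>2) = (p * x + r * y)\<^sup>2 + (p * q - r\<^sup>2) * y\<^sup>2"
    by (simp add: algebra_simps power2_eq_square)
  also have "\<dots> \<ge> 0"
    using assms by simp
  finally show ?thesis
    using \<open>0 < p\<close> by (simp add: zero_le_mult_iff)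
qed

lemma psd2_of_quadratic_nonneg:
  fixes A B C :: real
  assumes "\<And>x y. 0 \<le> A * x\<^sup>2 + 2 * B * x * y + C * y\<^sup>2"
  shows "0 \<le> A" "0 \<le> C" "B\<^sup>2 \<le> A * C"
proof -
  show "0 \<le> A" "0 \<le> C"
    using assms[of 1 0] assms[of 0 1] by simp_all
  show "B\<^sup>2 \<le> A * C"
  proof (cases "A = 0")
    case True
    show ?thesis
    proof (rule ccontr)
      assume "\<not> ?thesis"
      then have "B \<noteq> 0"
        using True by simp
      have "0 \<le> 2 * B * (- (C + 1) / (2 * B)) * 1 + C * 1\<^sup>2"
        using assms[of "- (C + 1) / (2 * B)" 1] True by simp
      also have "\<dots> = -1"
        using \<open>B \<noteq> 0\<close> by (simp add: field_simps)
      finally show False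
        by simp
    qed
  next
    case False
    then have "0 < A"
      using \<open>0 \<le> A\<close> by simp
    have "0 \<le> A * (- B)\<^sup>2 + 2 * B * (- B) * A + C * A\<^sup>2"
      using assms[of "- B" A] .
    also have "\<dots> = A * (A * C - B\<^sup>2)"
      by (simp add: algebra_simps power2_eq_square)
    finally show ?thesis
      using \<open>0 < A\<close> by (simp add: zero_le_mult_iff)
  qed
qed

lemma psd2_cross_le:
  fixes A1 A2 A3 B1 B2 B3 :: real
  assumes "0 \<le> A1" "0 \<le> A2" "A3\<^sup>2 \<le> A1 * A2" "0 \<le> B1" "0 \<le> B2" "B3\<^sup>2 \<le> B1 * B2"
  shows "2 * A3 * B3 \<le> A1 * B2 + A2 * B1"
proof -
  have "(2 * A3 * B3)\<^sup>2 = 4 * (A3\<^sup>2 * B3\<^sup>2)"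
    by (simp add: power2_eq_square)
  also have "\<dots> \<le> 4 * ((A1 * A2) * (B1 * B2))"
    using assms by (intro mult_left_mono mult_mono) auto
  also have "\<dots> \<le> (A1 * B2 + A2 * B1)\<^sup>2"
    using zero_le_power2[of "A1 * B2 - A2 * B1"] by (simp add: algebra_simps power2_eq_square)
  finally show ?thesis
    by (rule power2_le_imp_le) (use assms in simp)
qed

lemma psd2_cross_less:
  fixes A1 A2 A3 B1 B2 B3 :: real
  assumes "0 \<le> A1" "0 \<le> A2" "A3\<^sup>2 < A1 * A2" "0 \<le> B1" "0 \<le> B2" "B3\<^sup>2 \<le> B1 * B2" "0 < B1 + B2"
  shows "2 * A3 * B3 < A1 * B2 + A2 * B1"
proof -
  have "0 < A1" "0 < A2"
    using assms(1-3) zero_le_power2[of A3] by (auto simp: less_le)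
  consider "B1 = 0" | "B2 = 0" | "0 < B1" "0 < B2"
    using assms by linarith
  then show ?thesis
  proof cases
    case 1
    then show ?thesis
      using assms \<open>0 < A1\<close> \<open>0 < A2\<close> by simp
  next
    case 2
    then show ?thesis
      using assms \<open>0 < A1\<close> \<open>0 < A2\<close> by simp
  next
    case 3
    have "(2 * A3 * B3)\<^sup>2 = 4 * (A3\<^sup>2 * B3\<^sup>2)"
      by (simp add: power2_eq_square)
    also have "\<dots> \<le> 4 * (A3\<^sup>2 * (B1 * B2))"
      using assms by (intro mult_left_mono) auto
    also have "\<dots> < 4 * ((A1 * A2) * (B1 * B2))"
      using assms 3 by (intro mult_strict_left_mono mult_strict_right_mono) auto
    also have "\<dots> \<le> (A1 * B2 + A2 * B1)\<^sup>2"
      using zero_le_power2[of "A1 * B2 - A2 * B1"] by (simp add: algebra_simps power2_eq_square)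
    finally show ?thesis
      by (rule power2_less_imp_less) (use assms in simp)
  qed
qed

lemma psd2_rank_one:
  fixes x y z cs sn :: real
  assumes "0 \<le> x" "0 \<le> y" "z\<^sup>2 \<le> x * y" "cs\<^sup>2 + sn\<^sup>2 = 1"
    and "x * sn\<^sup>2 - 2 * z * sn * cs + y * cs\<^sup>2 = 0"
  shows "x = (x + y) * cs\<^sup>2" "y = (x + y) * sn\<^sup>2" "z = (x + y) * (cs * sn)"
proof -
  have "x * (x * sn\<^sup>2 - 2 * z * sn * cs + y * cs\<^sup>2) = (x * sn - z * cs)\<^sup>2 + (x * y - z\<^sup>2) * cs\<^sup>2"
    "y * (x * sn\<^sup>2 - 2 * z * sn * cs + y * cs\<^sup>2) = (y * cs - z * sn)\<^sup>2 + (x * y - z\<^sup>2) * sn\<^sup>2"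
    by (simp_all add: algebra_simps power2_eq_square)
  then have "(x * sn - z * cs)\<^sup>2 + (x * y - z\<^sup>2) * cs\<^sup>2 = 0"
    "(y * cs - z * sn)\<^sup>2 + (x * y - z\<^sup>2) * sn\<^sup>2 = 0"
    using assms(5) by simp_all
  moreover have "0 \<le> (x * y - z\<^sup>2) * cs\<^sup>2" "0 \<le> (x * y - z\<^sup>2) * sn\<^sup>2"
    using assms(3) by auto
  ultimately have "(x * sn - z * cs)\<^sup>2 = 0" "(y * cs - z * sn)\<^sup>2 = 0"
    by (smt (verit) zero_le_power2)+
  then have xz: "x * sn = z * cs" and yz: "y * cs = z * sn"
    by simp_all
  have "x = x * (cs\<^sup>2 + sn\<^sup>2)"
    using assms(4) by simp
  also have "\<dots> = x * cs\<^sup>2 + cs * (z * sn)"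
    using xz by (simp add: algebra_simps power2_eq_square)
  also have "\<dots> = (x + y) * cs\<^sup>2"
    using yz by (simp add: algebra_simps power2_eq_square)
  finally show "x = (x + y) * cs\<^sup>2" .
  have "y = y * (cs\<^sup>2 + sn\<^sup>2)"
    using assms(4) by simp
  also have "\<dots> = sn * (z * cs) + y * sn\<^sup>2"
    using yz by (simp add: algebra_simps power2_eq_square)
  also have "\<dots> = (x + y) * sn\<^sup>2"
    using xz by (simp add: algebra_simps power2_eq_square)
  finally show "y = (x + y) * sn\<^sup>2" .
  have "z = z * (cs\<^sup>2 + sn\<^sup>2)"
    using assms(4) by simp
  also have "\<dots> = (z * cs) * cs + (z * sn) * sn"
    by (simp add: algebra_simps power2_eq_square)
  also have "\<dots> = (x + y) * (cs * sn)"
    using xz yz by (simp add: algebra_simps)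
  finally show "z = (x + y) * (cs * sn)" .
qed

lemma psd2_singular_null_direction:
  fixes A B C :: real
  assumes "0 \<le> A" "0 \<le> B" "A * B = C\<^sup>2"
  obtains \<phi> where "A * (sin \<phi>)\<^sup>2 - 2 * C * sin \<phi> * cos \<phi> + B * (cos \<phi>)\<^sup>2 = 0"
proof (cases "A = 0")
  case True
  then have "C = 0"
    using assms by simp
  with True show ?thesis
    by (intro that[of "pi / 2"]) simp
next
  case False
  then have "0 < A"
    using assms by simp
  define \<rho> where "\<rho> = sqrt (A\<^sup>2 + C\<^sup>2)"
  have "0 < \<rho>"
    using \<open>0 < A\<close> by (simp add: \<rho>_def add_pos_nonneg)
  have "(A / \<rho>)\<^sup>2 + (C / \<rho>)\<^sup>2 = 1"
    using \<open>0 < \<rho>\<close> \<open>0 < A\<close> by (simp add: \<rho>_def power_divide add_divide_distrib[symmetric])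
  then obtain \<phi> where \<phi>: "A / \<rho> = cos \<phi>" "C / \<rho> = sin \<phi>"
    by (rule sincos_total_2pi)
  have "A * (sin \<phi>)\<^sup>2 - 2 * C * sin \<phi> * cos \<phi> + B * (cos \<phi>)\<^sup>2 = A * (A * B - C\<^sup>2) / \<rho>\<^sup>2"
    unfolding \<phi>[symmetric] using \<open>0 < \<rho>\<close> by (simp add: field_simps power2_eq_square)
  also have "\<dots> = 0"
    using assms by simp
  finally show ?thesis
    by (rule that)
qed

section \<open>The determinant of \<Omega>\<close>

text \<open>
  The entries are extended by \<open>0\<close> outside \<open>(a, b)\<close> (see
  \<open>integrable_hamiltonian_restrict\<close>), which makes them integrable on the whole line.
  Assumption \<open>trace_pos\<close> is the condition that \<open>{H = 0}\<close> is a null set.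
\<close>

locale integrable_hamiltonian =
  fixes a :: real and b :: ereal and k1 k2 k3 :: "real \<Rightarrow> real"
  assumes a_less_b: "ereal a < b"
    and int1: "integrable lborel k1" and int2: "integrable lborel k2" and int3: "integrable lborel k3"
    and nonneg1: "AE x in lborel. 0 \<le> k1 x" and nonneg2: "AE x in lborel. 0 \<le> k2 x"
    and psd: "AE x in lborel. (k3 x)\<^sup>2 \<le> k1 x * k2 x"
    and trace_pos: "AE x in lborel. x \<in> einterval a b \<longrightarrow> 0 < k1 x + k2 x"
begin

abbreviation "\<omega>\<^sub>1 \<equiv> omg k1"
abbreviation "\<omega>\<^sub>2 \<equiv> omg k2"
abbreviation "\<omega>\<^sub>3 \<equiv> omg k3"
abbreviation "\<Delta> \<equiv> detOm k1 k2 k3"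

lemma omega_psd: "0 \<le> \<omega>\<^sub>1 s t" "0 \<le> \<omega>\<^sub>2 s t" "(\<omega>\<^sub>3 s t)\<^sup>2 \<le> \<omega>\<^sub>1 s t * \<omega>\<^sub>2 s t"
proof -
  have "0 \<le> \<omega>\<^sub>1 s t * x\<^sup>2 + 2 * \<omega>\<^sub>3 s t * x * y + \<omega>\<^sub>2 s t * y\<^sup>2" for x y
  proof -
    have int23: "integrable lborel (\<lambda>u. 2 * x * y * k3 u + y\<^sup>2 * k2 u)"
      using int2 int3 by auto
    have "omg (\<lambda>u. x\<^sup>2 * k1 u + 1 * (2 * x * y * k3 u + y\<^sup>2 * k2 u)) s t
        = x\<^sup>2 * \<omega>\<^sub>1 s t + 1 * omg (\<lambda>u. 2 * x * y * k3 u + y\<^sup>2 * k2 u) s t"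
      by (rule omg_linear[OF int1 int23])
    also have "omg (\<lambda>u. 2 * x * y * k3 u + y\<^sup>2 * k2 u) s t = 2 * x * y * \<omega>\<^sub>3 s t + y\<^sup>2 * \<omega>\<^sub>2 s t"
      by (rule omg_linear[OF int3 int2])
    finally have eq: "omg (\<lambda>u. x\<^sup>2 * k1 u + 1 * (2 * x * y * k3 u + y\<^sup>2 * k2 u)) s t
        = \<omega>\<^sub>1 s t * x\<^sup>2 + 2 * \<omega>\<^sub>3 s t * x * y + \<omega>\<^sub>2 s t * y\<^sup>2"
      by (simp add: algebra_simps)
    have "AE u in lborel. 0 \<le> x\<^sup>2 * k1 u + 1 * (2 * x * y * k3 u + y\<^sup>2 * k2 u)"
      using nonneg1 nonneg2 psd
    proof eventually_elim
      case (elim u)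
      show ?case
        using psd2_quadratic_nonneg[OF elim, of x y] by (simp add: algebra_simps)
    qed
    then have "0 \<le> omg (\<lambda>u. x\<^sup>2 * k1 u + 1 * (2 * x * y * k3 u + y\<^sup>2 * k2 u)) s t"
      by (rule omg_nonneg)
    with eq show ?thesis
      by simp
  qed
  then show "0 \<le> \<omega>\<^sub>1 s t" "0 \<le> \<omega>\<^sub>2 s t" "(\<omega>\<^sub>3 s t)\<^sup>2 \<le> \<omega>\<^sub>1 s t * \<omega>\<^sub>2 s t"
    by (rule psd2_of_quadratic_nonneg)+
qed

lemma det_nonneg: "0 \<le> \<Delta> s t"
  using omega_psd[of s t] by (simp add: detOm_def)

lemma det_same: "\<Delta> s s = 0"
  by (simp add: detOm_def omg_empty)

lemma det_le_trace_sq: "4 * \<Delta> s t \<le> (\<omega>\<^sub>1 s t + \<omega>\<^sub>2 s t)\<^sup>2"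
proof -
  have "4 * \<Delta> s t \<le> 4 * (\<omega>\<^sub>1 s t * \<omega>\<^sub>2 s t)"
    by (simp add: detOm_def)
  also have "\<dots> \<le> (\<omega>\<^sub>1 s t + \<omega>\<^sub>2 s t)\<^sup>2"
    using zero_le_power2[of "\<omega>\<^sub>1 s t - \<omega>\<^sub>2 s t"] by (simp add: algebra_simps power2_eq_square)
  finally show ?thesis .
qed

lemma sqrt_det_le_trace: "2 * sqrt (\<Delta> s t) \<le> \<omega>\<^sub>1 s t + \<omega>\<^sub>2 s t"
proof -
  have "sqrt (4 * \<Delta> s t) \<le> sqrt ((\<omega>\<^sub>1 s t + \<omega>\<^sub>2 s t)\<^sup>2)"
    using det_le_trace_sq by (rule real_sqrt_le_mono)
  then show ?thesis
    using omega_psd[of s t] by (simp add: real_sqrt_mult)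
qed

lemma det_split:
  assumes "s \<le> u" "u \<le> t"
  shows "\<Delta> s t = \<Delta> s u + \<Delta> u t + (\<omega>\<^sub>1 s u * \<omega>\<^sub>2 u t + \<omega>\<^sub>2 s u * \<omega>\<^sub>1 u t - 2 * \<omega>\<^sub>3 s u * \<omega>\<^sub>3 u t)"
  using omg_split[OF int1 assms] omg_split[OF int2 assms] omg_split[OF int3 assms]
  by (simp add: detOm_def algebra_simps power2_eq_square)

lemma det_superadditive:
  assumes "s \<le> u" "u \<le> t"
  shows "\<Delta> s u + \<Delta> u t \<le> \<Delta> s t"
proof -
  have "2 * \<omega>\<^sub>3 s u * \<omega>\<^sub>3 u t \<le> \<omega>\<^sub>1 s u * \<omega>\<^sub>2 u t + \<omega>\<^sub>2 s u * \<omega>\<^sub>1 u t"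
    by (rule psd2_cross_le) (rule omega_psd)+
  then show ?thesis
    using det_split[OF assms] by simp
qed

lemma det_mono_right: "s \<le> u \<Longrightarrow> u \<le> t \<Longrightarrow> \<Delta> s u \<le> \<Delta> s t"
  using det_superadditive[of s u t] det_nonneg[of u t] by simp

lemma trace_omega_pos:
  assumes "ereal a \<le> p" "p < q" "p < b"
  shows "0 < \<omega>\<^sub>1 p q + \<omega>\<^sub>2 p q"
proof -
  obtain r where r: "p < ereal r" "ereal r < min q b"
    using ereal_dense2[of p "min q b"] assms by auto
  obtain p' where p': "p = ereal p'"
    using assms a_less_b by (cases p) auto
  have sub: "{p'<..<r} \<subseteq> einterval p q \<inter> einterval a b"
  proof
    fix x
    assume x: "x \<in> {p'<..<r}"
    then have "ereal x < q" "ereal x < b"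
      using r by (auto intro: order.strict_trans[of "ereal x" "ereal r"])
    then show "x \<in> einterval p q \<inter> einterval a b"
      using x p' assms(1) by (auto simp: einterval_def)
  qed
  let ?k = "\<lambda>u. 1 * k1 u + 1 * k2 u"
  have sum: "\<omega>\<^sub>1 p q + \<omega>\<^sub>2 p q = omg ?k p q"
    using omg_linear[OF int1 int2, of 1 1 p q] by simp
  have nonneg_k: "AE u in lborel. 0 \<le> ?k u"
    using nonneg1 nonneg2 by eventually_elim simp
  have "omg ?k p q \<noteq> 0"
  proof
    assume "omg ?k p q = 0"
    then have "AE u in lborel. u \<in> einterval p q \<longrightarrow> ?k u = 0"
      using int1 int2 nonneg_k by (intro omg_eq_0_imp_AE_zero) auto
    then have "AE u in lborel. u \<notin> {p'<..<r}"
      using trace_pos by eventually_elim (use sub in auto)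
    then have "emeasure lborel {p'<..<r} = 0"
      using AE_iff_null_sets[of "{p'<..<r}" lborel] by auto
    moreover have "p' < r"
      using r p' by simp
    ultimately show False
      by simp
  qed
  moreover have "0 \<le> omg ?k p q"
    using nonneg_k by (rule omg_nonneg)
  ultimately show ?thesis
    using sum by simp
qed

lemma det_strict_mono_right:
  assumes "ereal a \<le> s" "s \<le> u" "u < t" "u < b" "0 < \<Delta> s u"
  shows "\<Delta> s u < \<Delta> s t"
proof -
  have "2 * \<omega>\<^sub>3 s u * \<omega>\<^sub>3 u t < \<omega>\<^sub>1 s u * \<omega>\<^sub>2 u t + \<omega>\<^sub>2 s u * \<omega>\<^sub>1 u t"
    using omega_psd[of s u] omega_psd[of u t] assms trace_omega_pos[of u t]
    by (intro psd2_cross_less) (auto simp: detOm_def)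
  then show ?thesis
    using det_split[OF assms(2) less_imp_le[OF assms(3)]] det_nonneg[of u t] by simp
qed

lemma det_strict_mono_left:
  assumes "ereal a \<le> s" "s < u" "u \<le> t" "s < b" "0 < \<Delta> u t"
  shows "\<Delta> u t < \<Delta> s t"
proof -
  have "2 * \<omega>\<^sub>3 u t * \<omega>\<^sub>3 s u < \<omega>\<^sub>1 u t * \<omega>\<^sub>2 s u + \<omega>\<^sub>2 u t * \<omega>\<^sub>1 s u"
    using omega_psd[of s u] omega_psd[of u t] assms trace_omega_pos[of s u]
    by (intro psd2_cross_less) (auto simp: detOm_def)
  then show ?thesis
    using det_split[OF less_imp_le[OF assms(2)] assms(3)] det_nonneg[of s u] by (simp add: mult_ac)
qed

lemma continuous_on_det_right: "continuous_on {p..q} (\<lambda>t. \<Delta> (ereal p) (ereal t))"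
  unfolding detOm_def
  by (intro continuous_intros continuous_on_omg int1 int2 int3)

lemma continuous_on_det_left: "continuous_on {p..t} (\<lambda>s. \<Delta> (ereal s) (ereal t))"
proof -
  have eq: "\<Delta> (ereal s) (ereal t)
      = (\<omega>\<^sub>1 p t - \<omega>\<^sub>1 p s) * (\<omega>\<^sub>2 p t - \<omega>\<^sub>2 p s) - (\<omega>\<^sub>3 p t - \<omega>\<^sub>3 p s)\<^sup>2"
    if "s \<in> {p..t}" for s
    using that omg_split[OF int1, of p s t] omg_split[OF int2, of p s t] omg_split[OF int3, of p s t]
    by (simp add: detOm_def)
  have "continuous_on {p..t}
      (\<lambda>s. (\<omega>\<^sub>1 p t - \<omega>\<^sub>1 p s) * (\<omega>\<^sub>2 p t - \<omega>\<^sub>2 p s) - (\<omega>\<^sub>3 p t - \<omega>\<^sub>3 p s)\<^sup>2)"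
    by (intro continuous_intros continuous_on_omg int1 int2 int3)
  from continuous_on_eq[OF this eq[symmetric]] show ?thesis .
qed

lemma det_exceeds_before:
  assumes "ereal p < b" "d < \<Delta> (ereal p) b"
  obtains x where "p < x" "ereal x < b" "d < \<Delta> (ereal p) (ereal x)"
proof -
  obtain X where X: "\<And>i. p < X i" "\<And>i. ereal (X i) < b"
    "\<And>f. integrable lborel f \<Longrightarrow> (\<lambda>i. omg f (ereal p) (ereal (X i))) \<longlonglongrightarrow> omg f (ereal p) b"
    using omg_approx_from_below[OF assms(1)] by blast
  have "(\<lambda>i. \<Delta> (ereal p) (ereal (X i))) \<longlonglongrightarrow> \<Delta> (ereal p) b"
    unfolding detOm_def by (intro tendsto_intros X(3) int1 int2 int3)
  from order_tendstoD(1)[OF this assms(2)] obtain i where "d < \<Delta> (ereal p) (ereal (X i))"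
    by (auto simp: eventually_sequentially)
  then show ?thesis
    using X(1,2) that by blast
qed

lemma det_eq_unique_right:
  assumes "a \<le> p" "ereal p < b" "0 < d" "d < \<Delta> (ereal p) b"
  shows "\<exists>!x. ereal p < ereal x \<and> ereal x < b \<and> \<Delta> (ereal p) (ereal x) = d"
proof -
  obtain x0 where x0: "p < x0" "ereal x0 < b" "d < \<Delta> (ereal p) (ereal x0)"
    using det_exceeds_before[OF assms(2,4)] by blast
  obtain x where x: "p \<le> x" "x \<le> x0" "\<Delta> (ereal p) (ereal x) = d"
    using IVT'[of "\<lambda>t. \<Delta> (ereal p) (ereal t)" p d x0] x0 det_same[of "ereal p"] assms(3)
      continuous_on_det_right by auto
  have "x \<noteq> p"
    using x(3) det_same[of "ereal p"] assms(3) by auto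
  moreover have "ereal x < b"
    using x(2) x0(2) by (meson ereal_less_eq(3) le_less_trans)
  ultimately have sol: "ereal p < ereal x \<and> ereal x < b \<and> \<Delta> (ereal p) (ereal x) = d"
    using x by simp
  show ?thesis
  proof (rule ex1I[of _ x])
    fix y
    assume y: "ereal p < ereal y \<and> ereal y < b \<and> \<Delta> (ereal p) (ereal y) = d"
    show "y = x"
    proof (rule linorder_cases[of y x])
      assume "y < x"
      then have "\<Delta> (ereal p) (ereal y) < \<Delta> (ereal p) (ereal x)"
        using y sol assms by (intro det_strict_mono_right) simp_all
      then show ?thesis
        using y sol by simp
    next
      assume "x < y"
      then have "\<Delta> (ereal p) (ereal x) < \<Delta> (ereal p) (ereal y)"
        using y sol assms by (intro det_strict_mono_right) simp_all
      then show ?thesis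
        using y sol by simp
    qed
  qed (rule sol)
qed

lemma the_det_eq_right:
  assumes "ereal a \<le> s" "0 < d" "d < \<Delta> s b"
  defines "x \<equiv> THE x. s < ereal x \<and> ereal x < b \<and> \<Delta> s (ereal x) = d"
  shows "s < ereal x" "ereal x < b" "\<Delta> s (ereal x) = d"
proof -
  have "\<not> b \<le> s"
    using assms(2,3) by (auto simp: detOm_def omg_empty)
  then obtain p where p: "s = ereal p" "a \<le> p" "ereal p < b"
    using assms(1) by (cases s) auto
  have "\<exists>!x. s < ereal x \<and> ereal x < b \<and> \<Delta> s (ereal x) = d"
    using det_eq_unique_right[OF p(2,3) assms(2)] assms(3) p(1) by simp
  from theI'[OF this] show "s < ereal x" "ereal x < b" "\<Delta> s (ereal x) = d"
    unfolding x_def by simp_all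
qed

lemma det_eq_unique_left:
  assumes "a \<le> t" "ereal t < b" "0 < d" "d \<le> \<Delta> (ereal a) (ereal t)"
  shows "\<exists>!s. a \<le> s \<and> s \<le> t \<and> \<Delta> (ereal s) (ereal t) = d"
proof -
  obtain s where s: "a \<le> s" "s \<le> t" "\<Delta> (ereal s) (ereal t) = d"
    using IVT2'[of "\<lambda>s. \<Delta> (ereal s) (ereal t)" t d a] assms det_same[of "ereal t"]
      continuous_on_det_left by auto
  show ?thesis
  proof (rule ex1I[of _ s])
    fix y
    assume y: "a \<le> y \<and> y \<le> t \<and> \<Delta> (ereal y) (ereal t) = d"
    show "y = s"
    proof (rule linorder_cases[of y s])
      assume "y < s"
      then have "\<Delta> (ereal s) (ereal t) < \<Delta> (ereal y) (ereal t)"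
        using y s assms
        by (intro det_strict_mono_left) (auto intro: le_less_trans[of "ereal y" "ereal t"])
      then show ?thesis
        using y s by simp
    next
      assume "s < y"
      then have "\<Delta> (ereal y) (ereal t) < \<Delta> (ereal s) (ereal t)"
        using y s assms
        by (intro det_strict_mono_left) (auto intro: le_less_trans[of "ereal s" "ereal t"])
      then show ?thesis
        using y s by simp
    qed
  qed (use s in simp)
qed

lemma det_pos_if_definite:
  assumes "definite_ham a b k1 k2 k3"
  shows "0 < \<Delta> (ereal a) b"
proof (rule ccontr)
  assume not_pos: "\<not> 0 < \<Delta> (ereal a) b"
  let ?A = "\<omega>\<^sub>1 (ereal a) b" and ?B = "\<omega>\<^sub>2 (ereal a) b" and ?C = "\<omega>\<^sub>3 (ereal a) b"
  have "?A * ?B = ?C\<^sup>2"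
    using not_pos det_nonneg[of "ereal a" b] by (simp add: detOm_def)
  then obtain \<phi> where \<phi>: "?A * (sin \<phi>)\<^sup>2 - 2 * ?C * sin \<phi> * cos \<phi> + ?B * (cos \<phi>)\<^sup>2 = 0"
    using psd2_singular_null_direction[OF omega_psd(1,2)] by blast
  define q where "q u = (sin \<phi>)\<^sup>2 * k1 u + 1 * ((cos \<phi>)\<^sup>2 * k2 u + (- 2 * sin \<phi> * cos \<phi>) * k3 u)" for u
  have int23: "integrable lborel (\<lambda>u. (cos \<phi>)\<^sup>2 * k2 u + (- 2 * sin \<phi> * cos \<phi>) * k3 u)"
    using int2 int3 by auto
  have "omg q (ereal a) b = 0"
    unfolding q_def omg_linear[OF int1 int23] omg_linear[OF int2 int3]
    using \<phi> by (simp add: algebra_simps)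
  moreover have "integrable lborel q"
    unfolding q_def using int1 int23 by simp
  moreover have "AE u in lborel. 0 \<le> q u"
    using nonneg1 nonneg2 psd
  proof eventually_elim
    case (elim u)
    show ?case
      using psd2_quadratic_nonneg[OF elim, of "sin \<phi>" "- cos \<phi>"] by (simp add: q_def algebra_simps)
  qed
  ultimately have q0: "AE u in lborel. u \<in> einterval a b \<longrightarrow> q u = 0"
    by (intro omg_eq_0_imp_AE_zero)
  have "AE t in lborel. t \<in> hdom a b \<longrightarrow>
          k1 t = (k1 t + k2 t) * (cos \<phi>)\<^sup>2 \<and> k2 t = (k1 t + k2 t) * (sin \<phi>)\<^sup>2 \<and>
          k3 t = (k1 t + k2 t) * (cos \<phi> * sin \<phi>)"
    using q0 nonneg1 nonneg2 psd
  proof eventually_elim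
    case (elim t)
    show ?case
    proof
      assume "t \<in> hdom a b"
      then have "k1 t * (sin \<phi>)\<^sup>2 - 2 * k3 t * sin \<phi> * cos \<phi> + k2 t * (cos \<phi>)\<^sup>2 = 0"
        using elim(1) by (simp add: q_def hdom_eq_einterval algebra_simps)
      from psd2_rank_one[OF elim(2-4) _ this] show "k1 t = (k1 t + k2 t) * (cos \<phi>)\<^sup>2 \<and>
          k2 t = (k1 t + k2 t) * (sin \<phi>)\<^sup>2 \<and> k3 t = (k1 t + k2 t) * (cos \<phi> * sin \<phi>)"
        by simp
    qed
  qed
  then show False
    using assms by (auto simp: definite_ham_def)
qed

end

section \<open>Restriction of a Hamiltonian to its interval\<close>

lemma integrable_indicator_mult_if_dominated:
  fixes h g :: "real \<Rightarrow> real"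
  assumes "set_borel_measurable lborel A h"
    and "AE t in lborel. t \<in> A \<longrightarrow> \<bar>h t\<bar> \<le> g t"
    and "(\<integral>\<^sup>+t\<in>A. ennreal (g t) \<partial>lborel) < \<infinity>"
  shows "integrable lborel (\<lambda>x. indicator A x * h x)"
proof (rule integrableI_bounded)
  show "(\<lambda>x. indicator A x * h x) \<in> borel_measurable lborel"
    using assms(1) by (simp add: set_borel_measurable_def)
  have "(\<integral>\<^sup>+x. ennreal (norm (indicator A x * h x)) \<partial>lborel) \<le> (\<integral>\<^sup>+t\<in>A. ennreal (g t) \<partial>lborel)"
    using assms(2) by (intro nn_integral_mono_AE) (auto split: split_indicator intro: ennreal_leI)
  then show "(\<integral>\<^sup>+x. ennreal (norm (indicator A x * h x)) \<partial>lborel) < \<infinity>"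
    using assms(3) by (rule le_less_trans)
qed

lemma hamiltonian_psd:
  "is_hamiltonian a b h1 h2 h3 \<Longrightarrow>
     AE t in lborel. t \<in> hdom a b \<longrightarrow> 0 \<le> h1 t \<and> 0 \<le> h2 t \<and> (h3 t)\<^sup>2 \<le> h1 t * h2 t"
  by (simp add: is_hamiltonian_def)

lemma hamiltonian_entries_le_trace:
  assumes "is_hamiltonian a b h1 h2 h3"
  shows "AE t in lborel. t \<in> hdom a b \<longrightarrow>
           \<bar>h1 t\<bar> \<le> h1 t + h2 t \<and> \<bar>h2 t\<bar> \<le> h1 t + h2 t \<and> \<bar>h3 t\<bar> \<le> h1 t + h2 t"
  using hamiltonian_psd[OF assms]
proof eventually_elim
  case (elim t)
  show ?case
  proof
    assume "t \<in> hdom a b"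
    then have nonneg: "0 \<le> h1 t" "0 \<le> h2 t" and "(h3 t)\<^sup>2 \<le> h1 t * h2 t"
      using elim by auto
    moreover have "h1 t * h2 t \<le> (h1 t + h2 t)\<^sup>2"
      using nonneg by (simp add: power2_eq_square algebra_simps)
    ultimately have "\<bar>h3 t\<bar>\<^sup>2 \<le> (h1 t + h2 t)\<^sup>2"
      unfolding power2_abs by linarith
    then have "\<bar>h3 t\<bar> \<le> h1 t + h2 t"
      by (rule power2_le_imp_le) (use nonneg in linarith)
    with nonneg show "\<bar>h1 t\<bar> \<le> h1 t + h2 t \<and> \<bar>h2 t\<bar> \<le> h1 t + h2 t \<and> \<bar>h3 t\<bar> \<le> h1 t + h2 t"
      by linarith
  qed
qed

lemma hamiltonian_trace_pos:
  assumes "is_hamiltonian a b h1 h2 h3"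
  shows "AE t in lborel. t \<in> einterval a b \<longrightarrow> 0 < h1 t + h2 t"
proof -
  have "AE t in lborel. t \<notin> {t \<in> hdom a b. h1 t = 0 \<and> h2 t = 0 \<and> h3 t = 0}"
    using assms by (intro AE_not_in) (simp add: is_hamiltonian_def)
  then show ?thesis
    using hamiltonian_psd[OF assms]
  proof eventually_elim
    case (elim t)
    show ?case
    proof (rule impI, rule ccontr)
      assume "t \<in> einterval a b" "\<not> 0 < h1 t + h2 t"
      moreover have "0 \<le> h1 t" "0 \<le> h2 t" "(h3 t)\<^sup>2 \<le> h1 t * h2 t"
        using elim(2) \<open>t \<in> einterval a b\<close> by (simp_all add: hdom_eq_einterval)
      ultimately have "h1 t = 0" "h2 t = 0"
        by linarith+
      with \<open>(h3 t)\<^sup>2 \<le> h1 t * h2 t\<close> have "h3 t = 0"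
        by simp
      then show False
        using elim(1) \<open>t \<in> einterval a b\<close> \<open>h1 t = 0\<close> \<open>h2 t = 0\<close> by (simp add: hdom_eq_einterval)
    qed
  qed
qed

lemma integrable_hamiltonian_restrict:
  assumes H: "is_hamiltonian a b h1 h2 h3" and "limit_circle a b h1 h2"
  shows "integrable_hamiltonian a b (\<lambda>x. indicator (hdom a b) x * h1 x)
           (\<lambda>x. indicator (hdom a b) x * h2 x) (\<lambda>x. indicator (hdom a b) x * h3 x)"
proof unfold_locales
  have integrable: "integrable lborel (\<lambda>x. indicator (hdom a b) x * h x)"
    if "AE t in lborel. t \<in> hdom a b \<longrightarrow> \<bar>h t\<bar> \<le> h1 t + h2 t"
      and "set_borel_measurable lborel (hdom a b) h" for h
    using that assms(2)
    by (intro integrable_indicator_mult_if_dominated) (simp_all add: limit_circle_def)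
  show "integrable lborel (\<lambda>x. indicator (hdom a b) x * h1 x)"
    "integrable lborel (\<lambda>x. indicator (hdom a b) x * h2 x)"
    "integrable lborel (\<lambda>x. indicator (hdom a b) x * h3 x)"
    using H hamiltonian_entries_le_trace[OF H]
    by (auto simp: is_hamiltonian_def elim!: eventually_mono intro!: integrable)
  show "ereal a < b"
    using H by (simp add: is_hamiltonian_def)
  show "AE x in lborel. 0 \<le> indicator (hdom a b) x * h1 x"
    "AE x in lborel. 0 \<le> indicator (hdom a b) x * h2 x"
    "AE x in lborel. (indicator (hdom a b) x * h3 x)\<^sup>2
        \<le> indicator (hdom a b) x * h1 x * (indicator (hdom a b) x * h2 x)"
    using hamiltonian_psd[OF H] by (eventually_elim, simp split: split_indicator)+
  show "AE x in lborel. x \<in> einterval a b \<longrightarrow>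
      0 < indicator (hdom a b) x * h1 x + indicator (hdom a b) x * h2 x"
    using hamiltonian_trace_pos[OF H] by eventually_elim (simp add: hdom_eq_einterval)
qed

lemma omg_restrict:
  assumes "ereal a \<le> s" "t \<le> b"
  shows "omg (\<lambda>x. indicator (hdom a b) x * h x) s t = omg h s t"
proof -
  have "einterval s t \<subseteq> hdom a b"
  proof
    fix x
    assume "x \<in> einterval s t"
    then have "s < ereal x" "ereal x < t"
      by (simp_all add: einterval_def)
    then have "ereal a < ereal x" "ereal x < b"
      using assms by (auto dest: le_less_trans less_le_trans)
    then show "x \<in> hdom a b"
      by (simp add: hdom_def)
  qed
  then show ?thesis
    unfolding omg_eq_set_integral by (intro set_lebesgue_integral_cong) (auto split: split_indicator)
qed

lemma definite_ham_restrict: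
  "definite_ham a b (\<lambda>x. indicator (hdom a b) x * h1 x) (\<lambda>x. indicator (hdom a b) x * h2 x)
     (\<lambda>x. indicator (hdom a b) x * h3 x) \<longleftrightarrow> definite_ham a b h1 h2 h3"
  unfolding definite_ham_def by (simp add: indicator_def)

section \<open>The partition produced by the algorithm\<close>

locale hamiltonian_partition = integrable_hamiltonian +
  fixes c r :: real
  assumes c_pos: "0 < c" and r_pos: "0 < r" and r_large: "c / r\<^sup>2 < \<Delta> (ereal a) b"
begin

abbreviation "\<sigma> \<equiv> sigma_seq a b k1 k2 k3 c r"
abbreviation "\<kappa> \<equiv> kappaH a b k1 k2 k3 c r"
abbreviation "t_hat \<equiv> that_fn a b k1 k2 k3 c r"
abbreviation "s_hat u \<equiv> shat_fn a k1 k2 k3 c u r"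

definition \<delta> :: real where
  "\<delta> = c / r\<^sup>2"

definition tr\<Omega> :: real where
  "tr\<Omega> = \<omega>\<^sub>1 (ereal a) b + \<omega>\<^sub>2 (ereal a) b"

declare sigma_seq.simps(2) [simp del]

lemma delta_pos: "0 < \<delta>"
  using c_pos r_pos by (simp add: \<delta>_def)

lemma delta_less_det: "\<delta> < \<Delta> (ereal a) b"
  using r_large by (simp add: \<delta>_def)

lemma sigma_Suc_step:
  assumes "ereal a \<le> \<sigma> j" "\<delta> < \<Delta> (\<sigma> j) b"
  shows "\<sigma> j < \<sigma> (Suc j)" "\<sigma> (Suc j) < b" "\<Delta> (\<sigma> j) (\<sigma> (Suc j)) = \<delta>"
  using the_det_eq_right[OF assms(1) delta_pos assms(2)] assms(2)
  by (simp_all add: sigma_seq.simps(2) Let_def \<delta>_def)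

lemma sigma_Suc_stop: "\<not> \<delta> < \<Delta> (\<sigma> j) b \<Longrightarrow> \<sigma> (Suc j) = b"
  by (simp add: sigma_seq.simps(2) Let_def \<delta>_def)

lemma sigma_bounds: "ereal a \<le> \<sigma> j" "\<sigma> j \<le> b"
proof -
  have "ereal a \<le> \<sigma> j \<and> \<sigma> j \<le> b"
  proof (induction j)
    case (Suc j)
    then show ?case
      using sigma_Suc_step[of j] sigma_Suc_stop[of j] a_less_b
      by (cases "\<delta> < \<Delta> (\<sigma> j) b") (auto dest: order.strict_implies_order)
  qed (use a_less_b in simp)
  then show "ereal a \<le> \<sigma> j" "\<sigma> j \<le> b"
    by simp_all
qed

lemmas sigma_step = sigma_Suc_step[OF sigma_bounds(1)]

lemma sigma_terminates: "\<exists>j. \<sigma> j = b"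
proof (rule ccontr)
  assume "\<not> ?thesis"
  then have step: "\<delta> < \<Delta> (\<sigma> j) b" for j
    using sigma_Suc_stop by blast
  have sqrt_delta_le: "2 * sqrt \<delta> \<le> \<omega>\<^sub>1 (\<sigma> j) (\<sigma> (Suc j)) + \<omega>\<^sub>2 (\<sigma> j) (\<sigma> (Suc j))" for j
    using sqrt_det_le_trace[of "\<sigma> j" "\<sigma> (Suc j)"] sigma_step(3)[OF step] by simp
  have trace_sum: "real n * (2 * sqrt \<delta>) \<le> \<omega>\<^sub>1 (ereal a) (\<sigma> n) + \<omega>\<^sub>2 (ereal a) (\<sigma> n)" for n
  proof (induction n)
    case (Suc n)
    have "ereal a \<le> \<sigma> n" "\<sigma> n \<le> \<sigma> (Suc n)"
      using sigma_bounds(1) sigma_step(1)[OF step] by (auto intro: less_imp_le)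
    then show ?case
      using Suc.IH sqrt_delta_le[of n] omg_split[OF int1 \<open>ereal a \<le> \<sigma> n\<close>, of "\<sigma> (Suc n)"]
        omg_split[OF int2 \<open>ereal a \<le> \<sigma> n\<close>, of "\<sigma> (Suc n)"]
      by (simp add: algebra_simps)
  qed (simp add: omega_psd)
  obtain n :: nat where n: "tr\<Omega> / (2 * sqrt \<delta>) < real n"
    using reals_Archimedean2 by blast
  have "\<omega>\<^sub>1 (ereal a) (\<sigma> n) + \<omega>\<^sub>2 (ereal a) (\<sigma> n) \<le> tr\<Omega>"
    unfolding tr\<Omega>_def using sigma_bounds[of n] by (intro add_mono omg_mono int1 int2 nonneg1 nonneg2)
  then show False
    using trace_sum[of n] n delta_pos by (simp add: field_simps)
qed

lemma kappa: "\<sigma> \<kappa> = b" "1 \<le> \<kappa>" "j < \<kappa> \<Longrightarrow> \<sigma> j \<noteq> b"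
proof -
  obtain j where "\<sigma> j = b"
    using sigma_terminates by blast
  then have "\<not> \<delta> < \<Delta> (\<sigma> j) b"
    using det_same[of b] delta_pos by simp
  then have ex: "\<exists>j. j \<ge> 1 \<and> \<sigma> j = b"
    using sigma_Suc_stop by (intro exI[of _ "Suc j"]) simp
  have kappa_eq: "\<kappa> = (LEAST j. j \<ge> 1 \<and> \<sigma> j = b)"
    by (simp add: kappaH_def)
  from LeastI_ex[OF ex] show "\<sigma> \<kappa> = b" "1 \<le> \<kappa>"
    unfolding kappa_eq by simp_all
  show "\<sigma> j \<noteq> b" if "j < \<kappa>" for j
  proof (cases "j = 0")
    case True
    then show ?thesis
      using a_less_b by simp
  next
    case False
    then show ?thesis
      using that not_less_Least[of j "\<lambda>j. j \<ge> 1 \<and> \<sigma> j = b"] unfolding kappa_eq by simp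
  qed
qed

lemma kappa_step: "Suc j < \<kappa> \<Longrightarrow> \<delta> < \<Delta> (\<sigma> j) b"
  using sigma_Suc_stop kappa(3)[of "Suc j"] by blast

lemma kappa_last: "\<not> \<delta> < \<Delta> (\<sigma> (\<kappa> - 1)) b"
  using sigma_step(2)[of "\<kappa> - 1"] kappa(1,2) by auto

lemma two_le_kappa: "2 \<le> \<kappa>"
proof -
  have "\<sigma> 1 < b"
    using sigma_step(2)[of 0] delta_less_det by simp
  show ?thesis
  proof (rule ccontr)
    assume "\<not> 2 \<le> \<kappa>"
    then have "\<kappa> = 1"
      using kappa(2) by simp
    then show False
      using kappa(1) \<open>\<sigma> 1 < b\<close> by simp
  qed
qed

lemma sigma_less_Suc: "j < \<kappa> \<Longrightarrow> \<sigma> j < \<sigma> (Suc j)"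
proof (cases "Suc j < \<kappa>")
  case True
  then show ?thesis
    using sigma_step(1) kappa_step by blast
next
  case False
  assume "j < \<kappa>"
  then have "Suc j = \<kappa>"
    using False by simp
  then have "\<sigma> (Suc j) = b" "\<sigma> j \<noteq> b"
    using \<open>j < \<kappa>\<close> kappa(1,3) by simp_all
  then show ?thesis
    using sigma_bounds(2)[of j] by simp
qed

lemma sigma_strict_mono: "i < j \<Longrightarrow> j \<le> \<kappa> \<Longrightarrow> \<sigma> i < \<sigma> j"
proof (induction j)
  case (Suc j)
  then show ?case
    using sigma_less_Suc[of j] by (cases "i = j") (auto intro: order.strict_trans)
qed simp

lemma sigma_mono: "i \<le> j \<Longrightarrow> j \<le> \<kappa> \<Longrightarrow> \<sigma> i \<le> \<sigma> j"
  using sigma_strict_mono[of i j] by (cases "i = j") auto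

definition pt :: "nat \<Rightarrow> real" where
  "pt j = real_of_ereal (\<sigma> j)"

lemma sigma_eq_pt: "j < \<kappa> \<Longrightarrow> \<sigma> j = ereal (pt j)"
  unfolding pt_def using sigma_bounds[of j] kappa(3)[of j] a_less_b by (cases "\<sigma> j") auto

lemma pt_ge_a: "j < \<kappa> \<Longrightarrow> a \<le> pt j"
  using sigma_bounds(1)[of j] sigma_eq_pt[of j] by simp

lemma pt_less_b: "j < \<kappa> \<Longrightarrow> ereal (pt j) < b"
  using sigma_strict_mono[of j \<kappa>] sigma_eq_pt[of j] kappa(1) by simp

lemma pt_less_Suc: "Suc j < \<kappa> \<Longrightarrow> pt j < pt (Suc j)"
  using sigma_less_Suc[of j] sigma_eq_pt[of j] sigma_eq_pt[of "Suc j"] by simp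

lemma det_pt_Suc:
  assumes "Suc j < \<kappa>"
  shows "\<Delta> (ereal (pt j)) (ereal (pt (Suc j))) = \<delta>"
  using sigma_step(3)[OF kappa_step[OF assms]] sigma_eq_pt[of j] sigma_eq_pt[of "Suc j"] assms by simp

lemma t_hat: "\<sigma> 1 = ereal t_hat" "a < t_hat" "ereal t_hat < b" "\<Delta> (ereal a) (ereal t_hat) = \<delta>"
proof -
  show "\<sigma> 1 = ereal t_hat"
    using delta_less_det by (simp add: sigma_seq.simps(2) Let_def \<delta>_def that_fn_def)
  then show "a < t_hat" "ereal t_hat < b" "\<Delta> (ereal a) (ereal t_hat) = \<delta>"
    using sigma_step[of 0] delta_less_det by auto
qed

lemma s_hat:
  assumes "t_hat \<le> u" "ereal u < b"
  shows "a \<le> s_hat u" "s_hat u \<le> u" "\<Delta> (ereal (s_hat u)) (ereal u) = \<delta>"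
proof -
  have "\<delta> \<le> \<Delta> (ereal a) (ereal u)"
    using t_hat(4) det_mono_right[of "ereal a" "ereal t_hat" "ereal u"] t_hat(2) assms(1) by simp
  then have "\<exists>!s. a \<le> s \<and> s \<le> u \<and> \<Delta> (ereal s) (ereal u) = \<delta>"
    using det_eq_unique_left t_hat(2) assms delta_pos by simp
  from theI'[OF this] show "a \<le> s_hat u" "s_hat u \<le> u" "\<Delta> (ereal (s_hat u)) (ereal u) = \<delta>"
    by (simp_all add: shat_fn_def \<delta>_def)
qed

section \<open>Pointwise bounds for the kernel\<close>

abbreviation "K u \<equiv> kernelH a b k1 k2 k3 c u r"
abbreviation "m \<equiv> \<delta> / tr\<Omega>"

lemma trace_ge_sqrt_delta: "2 * sqrt \<delta> \<le> tr\<Omega>"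
  using sqrt_det_le_trace[of "ereal a" b] delta_less_det unfolding tr\<Omega>_def
  by (smt (verit) real_sqrt_le_mono)

lemma trace_pos: "0 < tr\<Omega>"
  using trace_ge_sqrt_delta delta_pos by (smt (verit) real_sqrt_gt_zero)

lemma m_pos: "0 < m"
  using delta_pos trace_pos by (rule divide_pos_pos)

lemma m_le_trace: "m \<le> tr\<Omega>"
proof -
  have "\<delta> = sqrt \<delta> * sqrt \<delta>"
    using delta_pos by simp
  also have "\<dots> \<le> tr\<Omega> * tr\<Omega>"
  proof -
    have "0 \<le> sqrt \<delta>"
      using delta_pos by simp
    moreover have "sqrt \<delta> \<le> tr\<Omega>"
      using trace_ge_sqrt_delta \<open>0 \<le> sqrt \<delta>\<close> by linarith
    ultimately show ?thesis
      by (intro mult_mono) linarith+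
  qed
  finally show ?thesis
    using trace_pos by (simp add: field_simps)
qed

lemma omega_le_trace:
  assumes "ereal a \<le> s" "s \<le> t" "t \<le> b"
  shows "\<omega>\<^sub>1 s t \<le> tr\<Omega>" "\<omega>\<^sub>2 s t \<le> tr\<Omega>"
  using omg_le_omg[OF int1 nonneg1 assms] omg_le_omg[OF int2 nonneg2 assms] omega_psd[of "ereal a" b]
  by (simp_all add: tr\<Omega>_def)

lemma kernel_before_t_hat:
  "u < t_hat \<Longrightarrow> K u = \<omega>\<^sub>2 (ereal a) (ereal u) * k1 u / (\<delta> + (\<omega>\<^sub>3 (ereal a) (ereal u))\<^sup>2)"
  by (simp add: kernelH_def \<delta>_def)

lemma kernel_after_t_hat: "\<not> u < t_hat \<Longrightarrow> K u = k1 u / \<omega>\<^sub>1 (ereal (s_hat u)) (ereal u)"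
  by (simp add: kernelH_def)

lemma kernel_le_first_piece:
  assumes u: "a \<le> u" "u < t_hat" and k: "0 \<le> k1 u"
  shows "K u \<le> k1 u / max m (\<omega>\<^sub>1 (ereal a) (ereal u))"
proof -
  let ?A = "\<omega>\<^sub>1 (ereal a) (ereal u)" and ?B = "\<omega>\<^sub>2 (ereal a) (ereal u)" and ?C = "\<omega>\<^sub>3 (ereal a) (ereal u)"
  have "ereal u < b"
    using u t_hat(3) by (meson ereal_less_eq(3) less_imp_le le_less_trans)
  have "\<Delta> (ereal a) (ereal u) \<le> \<delta>"
    using det_mono_right[of "ereal a" "ereal u" "ereal t_hat"] u t_hat(4) by simp
  then have AB: "?A * ?B \<le> \<delta> + ?C\<^sup>2"
    by (simp add: detOm_def)
  have "?B \<le> tr\<Omega>"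
    using omega_le_trace(2)[of "ereal a" "ereal u"] u \<open>ereal u < b\<close> by simp
  then have "?B * m \<le> tr\<Omega> * m"
    using m_pos by (intro mult_right_mono) simp_all
  also have "tr\<Omega> * m = \<delta>"
    using trace_pos by simp
  finally have "?B * m \<le> \<delta>" .
  have key: "?B * max m ?A \<le> \<delta> + ?C\<^sup>2"
  proof (cases "?A \<le> m")
    case True
    then have "max m ?A = m"
      by simp
    then show ?thesis
      unfolding \<open>max m ?A = m\<close> using \<open>?B * m \<le> \<delta>\<close> zero_le_power2[of ?C] by linarith
  next
    case False
    then show ?thesis
      using AB by (simp add: max_def mult.commute)
  qed
  have pos: "0 < \<delta> + ?C\<^sup>2" "0 < max m ?A"
    using delta_pos m_pos by (simp_all add: add_pos_nonneg)
  have "?B * k1 u * max m ?A \<le> k1 u * (\<delta> + ?C\<^sup>2)"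
    using mult_left_mono[OF key k] by (simp add: mult_ac)
  then have "?B * k1 u / (\<delta> + ?C\<^sup>2) \<le> k1 u / max m ?A"
    using pos by (simp add: divide_le_eq le_divide_eq mult_ac)
  then show ?thesis
    using kernel_before_t_hat[OF u(2)] by simp
qed

lemma det_piece_le_delta:
  assumes "j < \<kappa>"
  shows "\<Delta> (\<sigma> j) (\<sigma> (Suc j)) \<le> \<delta>"
proof (cases "Suc j < \<kappa>")
  case True
  then show ?thesis
    using sigma_step(3)[OF kappa_step] by simp
next
  case False
  then have "Suc j = \<kappa>" "j = \<kappa> - 1"
    using assms by simp_all
  then show ?thesis
    using kappa(1) kappa_last by simp
qed

lemma piece_bounds:
  assumes "j < \<kappa>" "u \<in> einterval (\<sigma> j) (\<sigma> (Suc j))"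
  shows "pt j < u" "ereal u < \<sigma> (Suc j)" "ereal u < b"
proof -
  show "pt j < u" "ereal u < \<sigma> (Suc j)"
    using assms sigma_eq_pt[OF assms(1)] by (auto simp: einterval_def)
  then show "ereal u < b"
    using sigma_bounds(2)[of "Suc j"] by (auto intro: order.strict_trans2)
qed

lemma t_hat_le_piece:
  assumes "0 < j" "j < \<kappa>" "u \<in> einterval (\<sigma> j) (\<sigma> (Suc j))"
  shows "t_hat \<le> u"
proof -
  have "\<sigma> 1 \<le> \<sigma> j"
    using sigma_mono[of 1 j] assms by simp
  then show ?thesis
    using t_hat(1) sigma_eq_pt[OF assms(2)] piece_bounds(1)[OF assms(2,3)] by simp
qed

lemma kernel_le_later_piece:
  assumes j: "0 < j" "j < \<kappa>" and u: "u \<in> einterval (\<sigma> j) (\<sigma> (Suc j))" and k: "0 \<le> k1 u"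
  shows "K u \<le> k1 u / max m (\<omega>\<^sub>1 (ereal (pt j)) (ereal u))"
proof -
  note u_bounds = piece_bounds[OF j(2) u]
  have "t_hat \<le> u"
    by (rule t_hat_le_piece[OF j u])
  note s_hat = s_hat[OF this u_bounds(3)]
  have "\<Delta> (ereal (pt j)) (ereal u) \<le> \<Delta> (\<sigma> j) (\<sigma> (Suc j))"
    using det_mono_right u_bounds(1,2) sigma_eq_pt[OF j(2)] by simp
  then have det_le: "\<Delta> (ereal (pt j)) (ereal u) \<le> \<delta>"
    using det_piece_le_delta[OF j(2)] by simp
  have "s_hat u \<le> pt j"
  proof (rule ccontr)
    assume "\<not> s_hat u \<le> pt j"
    then have "\<Delta> (ereal (s_hat u)) (ereal u) < \<Delta> (ereal (pt j)) (ereal u)"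
      using pt_ge_a[OF j(2)] pt_less_b[OF j(2)] s_hat delta_pos by (intro det_strict_mono_left) auto
    then show False
      using det_le s_hat(3) by simp
  qed
  then have omega_le: "\<omega>\<^sub>1 (ereal (pt j)) (ereal u) \<le> \<omega>\<^sub>1 (ereal (s_hat u)) (ereal u)"
    by (intro omg_le_omg[OF int1 nonneg1]) (use u_bounds in auto)
  have "\<delta> \<le> \<omega>\<^sub>1 (ereal (s_hat u)) (ereal u) * \<omega>\<^sub>2 (ereal (s_hat u)) (ereal u)"
    using s_hat(3) zero_le_power2[of "\<omega>\<^sub>3 (ereal (s_hat u)) (ereal u)"] unfolding detOm_def by linarith
  also have "\<dots> \<le> \<omega>\<^sub>1 (ereal (s_hat u)) (ereal u) * tr\<Omega>"
    using omega_le_trace(2)[of "ereal (s_hat u)" "ereal u"] s_hat u_bounds(3) omega_psd(1)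
    by (intro mult_left_mono) auto
  finally have "m \<le> \<omega>\<^sub>1 (ereal (s_hat u)) (ereal u)"
    using trace_pos by (simp add: divide_le_eq)
  then have "max m (\<omega>\<^sub>1 (ereal (pt j)) (ereal u)) \<le> \<omega>\<^sub>1 (ereal (s_hat u)) (ereal u)"
    using omega_le by simp
  moreover have "0 < max m (\<omega>\<^sub>1 (ereal (pt j)) (ereal u))"
    using m_pos by simp
  ultimately have "k1 u / \<omega>\<^sub>1 (ereal (s_hat u)) (ereal u) \<le> k1 u / max m (\<omega>\<^sub>1 (ereal (pt j)) (ereal u))"
    using k by (intro divide_left_mono) auto
  then show ?thesis
    using kernel_after_t_hat \<open>t_hat \<le> u\<close> by simp
qed

lemma kernel_upper_bound:
  assumes "j < \<kappa>" "u \<in> einterval (\<sigma> j) (\<sigma> (Suc j))" "0 \<le> k1 u"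
  shows "K u \<le> k1 u / max m (\<omega>\<^sub>1 (ereal (pt j)) (ereal u))"
proof (cases "j = 0")
  case True
  then have "pt j = a" "u < t_hat"
    using sigma_eq_pt[OF assms(1)] piece_bounds[OF assms(1,2)] t_hat(1) by simp_all
  then show ?thesis
    using kernel_le_first_piece piece_bounds(1)[OF assms(1,2)] assms(3) by simp
next
  case False
  then show ?thesis
    using kernel_le_later_piece assms by simp
qed

lemma kernel_lower_bound:
  assumes i: "Suc (Suc i) < \<kappa>" and u: "u \<in> einterval (\<sigma> (Suc i)) (\<sigma> (Suc (Suc i)))"
    and k: "0 \<le> k1 u"
  shows "k1 u / \<omega>\<^sub>1 (ereal (pt i)) (ereal u) \<le> K u"
proof -
  have "Suc i < \<kappa>"
    using i by simp
  note u_bounds = piece_bounds[OF this u]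
  have "t_hat \<le> u"
    using t_hat_le_piece[OF _ \<open>Suc i < \<kappa>\<close> u] by simp
  note s_hat = s_hat[OF this u_bounds(3)]
  have "pt i < pt (Suc i)"
    using pt_less_Suc \<open>Suc i < \<kappa>\<close> by simp
  then have "\<delta> \<le> \<Delta> (ereal (pt i)) (ereal u)"
    using det_pt_Suc[OF \<open>Suc i < \<kappa>\<close>] det_mono_right[of "ereal (pt i)" "ereal (pt (Suc i))" "ereal u"]
      u_bounds(1) by simp
  have "pt i \<le> s_hat u"
  proof (rule ccontr)
    assume "\<not> pt i \<le> s_hat u"
    then have "\<Delta> (ereal (pt i)) (ereal u) < \<Delta> (ereal (s_hat u)) (ereal u)"
      using \<open>\<delta> \<le> \<Delta> (ereal (pt i)) (ereal u)\<close> delta_pos s_hat u_bounds(1,3) \<open>pt i < pt (Suc i)\<close>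
      by (intro det_strict_mono_left) (auto intro: le_less_trans[of _ "ereal u"])
    then show False
      using \<open>\<delta> \<le> \<Delta> (ereal (pt i)) (ereal u)\<close> s_hat(3) by simp
  qed
  then have omega_le: "\<omega>\<^sub>1 (ereal (s_hat u)) (ereal u) \<le> \<omega>\<^sub>1 (ereal (pt i)) (ereal u)"
    by (intro omg_le_omg[OF int1 nonneg1]) (use s_hat in auto)
  have "0 < \<omega>\<^sub>1 (ereal (s_hat u)) (ereal u)"
  proof (rule ccontr)
    assume "\<not> 0 < \<omega>\<^sub>1 (ereal (s_hat u)) (ereal u)"
    then have "\<omega>\<^sub>1 (ereal (s_hat u)) (ereal u) = 0"
      using omega_psd(1)[of "ereal (s_hat u)" "ereal u"] by simp
    then have "\<Delta> (ereal (s_hat u)) (ereal u) \<le> 0"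
      by (simp add: detOm_def)
    then show False
      using s_hat(3) delta_pos by simp
  qed
  then have "k1 u / \<omega>\<^sub>1 (ereal (pt i)) (ereal u) \<le> k1 u / \<omega>\<^sub>1 (ereal (s_hat u)) (ereal u)"
    using omega_le k by (intro divide_left_mono) auto
  then show ?thesis
    using kernel_after_t_hat \<open>t_hat \<le> u\<close> by simp
qed

section \<open>Integral bounds for the kernel\<close>

lemma omega1_measurable: "(\<lambda>u. \<omega>\<^sub>1 s (ereal u)) \<in> borel_measurable borel"
  by (rule borel_measurable_mono[OF mono_omg[OF int1 nonneg1]])

lemma pieces_disjoint: "disjoint_family_on (\<lambda>j. einterval (\<sigma> j) (\<sigma> (Suc j))) {..<\<kappa>}"
  unfolding disjoint_family_on_def
proof (intro ballI impI)
  fix i j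
  assume "i \<in> {..<\<kappa>}" "j \<in> {..<\<kappa>}" "i \<noteq> j"
  then have "\<sigma> (Suc i) \<le> \<sigma> j \<or> \<sigma> (Suc j) \<le> \<sigma> i"
    using sigma_mono[of "Suc i" j] sigma_mono[of "Suc j" i] by (cases "i < j") auto
  then show "einterval (\<sigma> i) (\<sigma> (Suc i)) \<inter> einterval (\<sigma> j) (\<sigma> (Suc j)) = {}"
    by (auto simp: einterval_def dest: less_le_trans)
qed

lemma pieces_subset: "einterval (\<sigma> j) (\<sigma> (Suc j)) \<subseteq> einterval a b"
proof
  fix u
  assume "u \<in> einterval (\<sigma> j) (\<sigma> (Suc j))"
  then have u: "\<sigma> j < ereal u" "ereal u < \<sigma> (Suc j)"
    by (simp_all add: einterval_def)
  have "ereal a < ereal u"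
    using sigma_bounds(1)[of j] u(1) by (rule order.strict_trans1)
  moreover have "ereal u < b"
    using u(2) sigma_bounds(2)[of "Suc j"] by (rule order.strict_trans2)
  ultimately show "u \<in> einterval a b"
    by (simp add: einterval_def)
qed

lemma einterval_subset_pieces:
  "einterval a b \<subseteq> (\<Union>j<\<kappa>. einterval (\<sigma> j) (\<sigma> (Suc j))) \<union> pt ` {..<\<kappa>}"
proof
  fix u
  assume u: "u \<in> einterval a b"
  show "u \<in> (\<Union>j<\<kappa>. einterval (\<sigma> j) (\<sigma> (Suc j))) \<union> pt ` {..<\<kappa>}"
  proof (cases "u \<in> pt ` {..<\<kappa>}")
    case False
    define S where "S = {j. j < \<kappa> \<and> \<sigma> j < ereal u}"
    define j where "j = Max S"
    have "finite S"
      by (simp add: S_def)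
    moreover have "0 \<in> S"
      using u kappa(2) by (simp add: S_def einterval_def)
    ultimately have "j \<in> S"
      unfolding j_def by (intro Max_in) auto
    then have j: "j < \<kappa>" "\<sigma> j < ereal u"
      by (simp_all add: S_def)
    have "ereal u < \<sigma> (Suc j)"
    proof (cases "Suc j < \<kappa>")
      case True
      have "Suc j \<notin> S"
        using Max_ge[OF \<open>finite S\<close>, of "Suc j"] by (auto simp flip: j_def)
      then have "\<not> \<sigma> (Suc j) < ereal u"
        using True by (simp add: S_def)
      moreover have "\<sigma> (Suc j) \<noteq> ereal u"
        using sigma_eq_pt[OF True] False True by auto
      ultimately show ?thesis
        by simp
    next
      case False
      then have "Suc j = \<kappa>"
        using j(1) by simp
      then show ?thesis
        using kappa(1) u by (simp add: einterval_def)
    qed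
    then show ?thesis
      using j by (auto simp: einterval_def)
  qed simp
qed

lemma nn_integral_piece_upper:
  assumes "j < \<kappa>"
  shows "(\<integral>\<^sup>+u. ennreal (k1 u) * ennreal (1 / max m (\<omega>\<^sub>1 (ereal (pt j)) u))
            * indicator (einterval (\<sigma> j) (\<sigma> (Suc j))) u \<partial>lborel) \<le> ennreal (1 + ln (tr\<Omega> / m))"
proof -
  have less: "ereal (pt j) < \<sigma> (Suc j)"
    using sigma_less_Suc[OF assms] sigma_eq_pt[OF assms] by simp
  have "(\<integral>\<^sup>+u. ennreal (k1 u) * ennreal (1 / max m (\<omega>\<^sub>1 (ereal (pt j)) u))
            * indicator (einterval (\<sigma> j) (\<sigma> (Suc j))) u \<partial>lborel)
      = (\<integral>\<^sup>+v. ennreal (1 / max m v) * indicator {0 <..< \<omega>\<^sub>1 (ereal (pt j)) (\<sigma> (Suc j))} v \<partial>lborel)"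
    using nn_integral_omg_substitution[OF int1 nonneg1 order.refl less, of "\<lambda>v. ennreal (1 / max m v)"]
    by (simp add: sigma_eq_pt[OF assms] omg_empty)
  also have "\<dots> \<le> ennreal (1 + ln (tr\<Omega> / m))"
    using m_pos m_le_trace omega_le_trace(1) pt_ge_a[OF assms] less sigma_bounds(2)
    by (intro nn_integral_inverse_max_le) auto
  finally show ?thesis .
qed

lemma nn_integral_kernel_le:
  "(\<integral>\<^sup>+u\<in>einterval a b. ennreal (K u) \<partial>lborel) \<le> of_nat \<kappa> * ennreal (1 + ln (tr\<Omega> / m))"
proof -
  define G where "G j u = ennreal (k1 u) * ennreal (1 / max m (\<omega>\<^sub>1 (ereal (pt j)) u))
      * indicator (einterval (\<sigma> j) (\<sigma> (Suc j))) u" for j u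
  have G_measurable: "G j \<in> borel_measurable lborel" for j
    using omega1_measurable borel_measurable_integrable[OF int1] unfolding G_def by measurable
  have "AE u in lborel. u \<notin> pt ` {..<\<kappa>}"
    by (rule AE_not_in) (simp add: finite_imp_null_set_lborel)
  then have "AE u in lborel. ennreal (K u) * indicator (einterval a b) u \<le> (\<Sum>j<\<kappa>. G j u)"
    using nonneg1
  proof eventually_elim
    case (elim u)
    show ?case
    proof (cases "u \<in> einterval a b")
      case True
      then obtain j where j: "j < \<kappa>" "u \<in> einterval (\<sigma> j) (\<sigma> (Suc j))"
        using einterval_subset_pieces elim(1) by blast
      have "ennreal (K u) \<le> ennreal (k1 u / max m (\<omega>\<^sub>1 (ereal (pt j)) (ereal u)))"
        using kernel_upper_bound[OF j elim(2)] by (rule ennreal_leI)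
      also have "\<dots> = G j u"
        using j(2) elim(2) m_pos by (simp add: G_def ennreal_mult[symmetric] divide_inverse)
      also have "\<dots> \<le> (\<Sum>j<\<kappa>. G j u)"
        using j(1) by (intro member_le_sum) auto
      finally show ?thesis
        using True by simp
    qed simp
  qed
  then have "(\<integral>\<^sup>+u\<in>einterval a b. ennreal (K u) \<partial>lborel) \<le> (\<integral>\<^sup>+u. (\<Sum>j<\<kappa>. G j u) \<partial>lborel)"
    by (rule nn_integral_mono_AE)
  also have "\<dots> = (\<Sum>j<\<kappa>. \<integral>\<^sup>+u. G j u \<partial>lborel)"
    using G_measurable by (rule nn_integral_sum)
  also have "\<dots> \<le> (\<Sum>j<\<kappa>. ennreal (1 + ln (tr\<Omega> / m)))"
    unfolding G_def by (intro sum_mono nn_integral_piece_upper) simp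
  finally show ?thesis
    by simp
qed

definition \<xi> :: "nat \<Rightarrow> real" where
  "\<xi> i = \<omega>\<^sub>1 (ereal (pt i)) (ereal (pt (Suc i)))"

lemma xi_pos:
  assumes "Suc i < \<kappa>"
  shows "0 < \<xi> i"
proof (rule ccontr)
  assume "\<not> 0 < \<xi> i"
  then have "\<xi> i = 0"
    using omega_psd(1)[of "ereal (pt i)" "ereal (pt (Suc i))"] by (simp add: \<xi>_def)
  then have "\<Delta> (ereal (pt i)) (ereal (pt (Suc i))) \<le> 0"
    by (simp add: \<xi>_def detOm_def)
  then show False
    using det_pt_Suc[OF assms] delta_pos by simp
qed

lemma nn_integral_piece_lower:
  assumes "Suc (Suc i) < \<kappa>"
  shows "(\<integral>\<^sup>+u. ennreal (k1 u) * ennreal (1 / \<omega>\<^sub>1 (ereal (pt i)) u)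
            * indicator (einterval (\<sigma> (Suc i)) (\<sigma> (Suc (Suc i)))) u \<partial>lborel)
       = ennreal (ln (\<xi> i + \<xi> (Suc i)) - ln (\<xi> i))"
proof -
  have less: "pt i < pt (Suc i)" "pt (Suc i) < pt (Suc (Suc i))"
    using pt_less_Suc assms by simp_all
  have split: "\<omega>\<^sub>1 (ereal (pt i)) (ereal (pt (Suc (Suc i)))) = \<xi> i + \<xi> (Suc i)"
    unfolding \<xi>_def using less by (intro omg_split[OF int1]) simp_all
  have "(\<integral>\<^sup>+u. ennreal (k1 u) * ennreal (1 / \<omega>\<^sub>1 (ereal (pt i)) u)
            * indicator (einterval (\<sigma> (Suc i)) (\<sigma> (Suc (Suc i)))) u \<partial>lborel)
      = (\<integral>\<^sup>+v. ennreal (1 / v) * indicator {\<xi> i <..< \<xi> i + \<xi> (Suc i)} v \<partial>lborel)"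
    using nn_integral_omg_substitution[OF int1 nonneg1, of "pt i" "pt (Suc i)" "ereal (pt (Suc (Suc i)))"
        "\<lambda>v. ennreal (1 / v)"] less assms
    by (simp add: sigma_eq_pt split \<xi>_def[symmetric])
  also have "\<dots> = ennreal (ln (\<xi> i + \<xi> (Suc i)) - ln (\<xi> i))"
    using xi_pos[of i] xi_pos[of "Suc i"] assms by (intro nn_integral_inverse_Ioo) simp_all
  finally show ?thesis .
qed

lemma nn_integral_kernel_ge:
  "ennreal (\<Sum>i<\<kappa> - 2. ln (\<xi> i + \<xi> (Suc i)) - ln (\<xi> i)) \<le> (\<integral>\<^sup>+u\<in>einterval a b. ennreal (K u) \<partial>lborel)"
proof -
  define L where "L i u = ennreal (k1 u) * ennreal (1 / \<omega>\<^sub>1 (ereal (pt i)) u)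
      * indicator (einterval (\<sigma> (Suc i)) (\<sigma> (Suc (Suc i)))) u" for i u
  have L_measurable: "L i \<in> borel_measurable lborel" for i
    using omega1_measurable borel_measurable_integrable[OF int1] unfolding L_def by measurable
  have "0 \<le> ln (\<xi> i + \<xi> (Suc i)) - ln (\<xi> i)" if "i < \<kappa> - 2" for i
  proof -
    have "0 < \<xi> i" "0 < \<xi> (Suc i)"
      using xi_pos that by simp_all
    then show ?thesis
      by simp
  qed
  then have "ennreal (\<Sum>i<\<kappa> - 2. ln (\<xi> i + \<xi> (Suc i)) - ln (\<xi> i))
      = (\<Sum>i<\<kappa> - 2. ennreal (ln (\<xi> i + \<xi> (Suc i)) - ln (\<xi> i)))"
    by (intro sum_ennreal[symmetric]) simp
  also have "\<dots> = (\<Sum>i<\<kappa> - 2. \<integral>\<^sup>+u. L i u \<partial>lborel)"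
    unfolding L_def by (intro sum.cong refl nn_integral_piece_lower[symmetric]) simp
  also have "\<dots> = (\<integral>\<^sup>+u. (\<Sum>i<\<kappa> - 2. L i u) \<partial>lborel)"
    using L_measurable by (rule nn_integral_sum[symmetric])
  also have "\<dots> \<le> (\<integral>\<^sup>+u\<in>einterval a b. ennreal (K u) \<partial>lborel)"
  proof (rule nn_integral_mono)
    fix u
    have "L i u \<le> ennreal (K u) * indicator (einterval (\<sigma> (Suc i)) (\<sigma> (Suc (Suc i)))) u"
      if "i < \<kappa> - 2" for i
    proof (cases "u \<in> einterval (\<sigma> (Suc i)) (\<sigma> (Suc (Suc i))) \<and> 0 \<le> k1 u")
      case True
      then show ?thesis
        using kernel_lower_bound[of i u] that omega_psd(1)[of "ereal (pt i)" "ereal u"]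
        by (auto simp: L_def ennreal_mult[symmetric] divide_inverse intro: ennreal_leI)
    qed (auto simp: L_def ennreal_neg)
    then have "(\<Sum>i<\<kappa> - 2. L i u)
        \<le> (\<Sum>i<\<kappa> - 2. ennreal (K u) * indicator (einterval (\<sigma> (Suc i)) (\<sigma> (Suc (Suc i)))) u)"
      by (intro sum_mono) simp
    also have "\<dots> = ennreal (K u) * (\<Sum>i<\<kappa> - 2. indicator (einterval (\<sigma> (Suc i)) (\<sigma> (Suc (Suc i)))) u)"
      by (rule sum_distrib_left[symmetric])
    also have "(\<Sum>i<\<kappa> - 2. indicator (einterval (\<sigma> (Suc i)) (\<sigma> (Suc (Suc i)))) u)
        = (indicator (\<Union>i<\<kappa> - 2. einterval (\<sigma> (Suc i)) (\<sigma> (Suc (Suc i)))) u :: ennreal)"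
      using pieces_disjoint
      by (intro indicator_UN_disjoint[symmetric]) (auto simp: disjoint_family_on_def)
    also have "\<dots> \<le> indicator (einterval a b) u"
      using pieces_subset by (auto split: split_indicator)
    finally show "(\<Sum>i<\<kappa> - 2. L i u) \<le> ennreal (K u) * indicator (einterval a b) u"
      by (auto simp: mult_left_mono)
  qed
  finally show ?thesis .
qed

lemma xi_last_first: "4 * \<delta> * \<xi> 0 \<le> tr\<Omega>\<^sup>2 * \<xi> (\<kappa> - 2)"
proof -
  define n where "n = \<kappa> - 2"
  define v where "v = \<omega>\<^sub>2 (ereal (pt n)) (ereal (pt (Suc n)))"
  let ?A = "\<omega>\<^sub>1 (ereal a) b" and ?B = "\<omega>\<^sub>2 (ereal a) b"
  have n: "Suc n < \<kappa>"
    using two_le_kappa by (simp add: n_def)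
  have "\<delta> \<le> \<xi> n * v"
    using det_pt_Suc[OF n] zero_le_power2[of "\<omega>\<^sub>3 (ereal (pt n)) (ereal (pt (Suc n)))"]
    unfolding \<xi>_def v_def detOm_def by linarith
  moreover have "v \<le> ?B"
    unfolding v_def using pt_ge_a[of n] n pt_less_Suc[OF n] pt_less_b[OF n]
    by (intro omg_le_omg[OF int2 nonneg2]) auto
  moreover have "\<xi> 0 \<le> ?A"
    unfolding \<xi>_def using pt_ge_a[of 0] pt_less_Suc[of 0] pt_less_b[of 1] two_le_kappa
    by (intro omg_le_omg[OF int1 nonneg1]) auto
  moreover have "4 * (?A * ?B) \<le> tr\<Omega>\<^sup>2"
    using zero_le_power2[of "?A - ?B"] by (simp add: tr\<Omega>_def algebra_simps power2_eq_square)
  moreover have "0 \<le> \<xi> 0" "0 \<le> \<xi> n" "0 \<le> v" "0 \<le> ?A" "0 \<le> \<delta>"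
    unfolding \<xi>_def v_def using delta_pos by (simp_all add: omega_psd)
  ultimately have "4 * \<delta> * \<xi> 0 \<le> 4 * (\<xi> n * ?B) * ?A"
    by (intro mult_mono) (auto intro: order.trans mult_left_mono)
  also have "\<dots> \<le> tr\<Omega>\<^sup>2 * \<xi> n"
    using \<open>4 * (?A * ?B) \<le> tr\<Omega>\<^sup>2\<close> \<open>0 \<le> \<xi> n\<close> mult_right_mono by (fastforce simp: mult_ac)
  finally show ?thesis
    by (simp add: n_def)
qed

lemma ln_delta: "ln \<delta> = ln c - 2 * ln r"
  using c_pos r_pos by (simp add: \<delta>_def ln_div ln_realpow)

lemma kernel_integral_lower:
  "ennreal (real \<kappa> * ln 2 - (ln r + ln (2 * tr\<Omega> / sqrt c)))
     \<le> (\<integral>\<^sup>+u\<in>einterval a b. ennreal (K u) \<partial>lborel)"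
proof -
  define n where "n = \<kappa> - 2"
  have xi_pos': "0 < \<xi> i" if "i \<le> n" for i
    using xi_pos[of i] that two_le_kappa by (simp add: n_def)
  have "0 < 4 * \<delta> * \<xi> 0" "0 < tr\<Omega>\<^sup>2 * \<xi> n"
    using xi_pos'[of 0] xi_pos'[of n] delta_pos trace_pos by simp_all
  then have "ln (4 * \<delta> * \<xi> 0) \<le> ln (tr\<Omega>\<^sup>2 * \<xi> n)"
    using xi_last_first by (simp add: n_def)
  then have "2 * ln 2 + ln \<delta> - 2 * ln tr\<Omega> \<le> ln (\<xi> n) - ln (\<xi> 0)"
    using xi_pos'[of 0] xi_pos'[of n] delta_pos trace_pos ln_realpow[of 2 2]
    by (simp add: ln_mult ln_realpow)
  moreover have "real \<kappa> * ln 2 = real n * ln 2 + 2 * ln 2"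
    using two_le_kappa by (simp add: n_def of_nat_diff algebra_simps)
  moreover have "ln (2 * tr\<Omega> / sqrt c) = ln 2 + ln tr\<Omega> - ln c / 2"
    using trace_pos c_pos by (simp add: ln_div ln_mult ln_sqrt)
  ultimately have "real \<kappa> * ln 2 - (ln r + ln (2 * tr\<Omega> / sqrt c))
      \<le> real n * ln 2 + (ln (\<xi> n) - ln (\<xi> 0)) / 2"
    using ln_delta by (simp add: field_simps)
  also have "\<dots> \<le> (\<Sum>i<n. ln (\<xi> i + \<xi> (Suc i)) - ln (\<xi> i))"
    using xi_pos' by (rule sum_ln_consecutive_ratio_ge)
  finally have "ennreal (real \<kappa> * ln 2 - (ln r + ln (2 * tr\<Omega> / sqrt c)))
      \<le> ennreal (\<Sum>i<\<kappa> - 2. ln (\<xi> i + \<xi> (Suc i)) - ln (\<xi> i))"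
    by (intro ennreal_leI) (simp add: n_def)
  also have "\<dots> \<le> (\<integral>\<^sup>+u\<in>einterval a b. ennreal (K u) \<partial>lborel)"
    by (rule nn_integral_kernel_ge)
  finally show ?thesis .
qed

lemma kernel_integral_upper:
  "(\<integral>\<^sup>+u\<in>einterval a b. ennreal (K u) \<partial>lborel)
     \<le> ennreal (2 * exp 1 * real \<kappa> * (ln r + ln (tr\<Omega> / (2 * sqrt c)) + 1))"
proof -
  define Y where "Y = ln r + ln (tr\<Omega> / (2 * sqrt c))"
  have "2 * sqrt c = r * (2 * sqrt \<delta>)"
    using r_pos by (simp add: \<delta>_def real_sqrt_divide)
  also have "\<dots> \<le> r * tr\<Omega>"
    using trace_ge_sqrt_delta r_pos by simp
  finally have "1 / r \<le> tr\<Omega> / (2 * sqrt c)"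
    using c_pos r_pos by (simp add: field_simps)
  then have "ln (1 / r) \<le> ln (tr\<Omega> / (2 * sqrt c))"
    using r_pos by (simp add: ln_mono)
  then have "0 \<le> Y"
    using r_pos by (simp add: Y_def ln_div)
  have "ln (tr\<Omega> / m) = 2 * Y + 2 * ln 2"
    using trace_pos delta_pos c_pos ln_delta
    by (simp add: Y_def ln_div ln_mult ln_sqrt field_simps)
  moreover have "ln (2::real) \<le> 1" "2 \<le> exp (1::real)"
    using ln_le_minus_one[of 2] exp_ge_add_one_self[of 1] by simp_all
  ultimately have "1 + ln (tr\<Omega> / m) \<le> 2 * exp 1 * (Y + 1)"
    using \<open>0 \<le> Y\<close> mult_right_mono[of 2 "2 * exp 1" Y] by (simp add: algebra_simps)
  have "0 \<le> 1 + ln (tr\<Omega> / m)"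
    using \<open>ln (tr\<Omega> / m) = 2 * Y + 2 * ln 2\<close> \<open>0 \<le> Y\<close> by simp
  have "real \<kappa> * (1 + ln (tr\<Omega> / m)) \<le> real \<kappa> * (2 * exp 1 * (Y + 1))"
    using \<open>1 + ln (tr\<Omega> / m) \<le> 2 * exp 1 * (Y + 1)\<close> by (rule mult_left_mono) simp
  also have "\<dots> = 2 * exp 1 * real \<kappa> * (Y + 1)"
    by (simp only: mult_ac)
  finally have "ennreal (real \<kappa> * (1 + ln (tr\<Omega> / m))) \<le> ennreal (2 * exp 1 * real \<kappa> * (Y + 1))"
    by (rule ennreal_leI)
  moreover have "of_nat \<kappa> * ennreal (1 + ln (tr\<Omega> / m)) = ennreal (real \<kappa> * (1 + ln (tr\<Omega> / m)))"
    using \<open>0 \<le> 1 + ln (tr\<Omega> / m)\<close> by (simp add: ennreal_of_nat_eq_real_of_nat ennreal_mult)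
  ultimately have "of_nat \<kappa> * ennreal (1 + ln (tr\<Omega> / m)) \<le> ennreal (2 * exp 1 * real \<kappa> * (Y + 1))"
    by simp
  with nn_integral_kernel_le show ?thesis
    by (simp add: Y_def)
qed

section \<open>Transfer to the original Hamiltonian\<close>

lemma sigma_seq_cong:
  assumes "\<And>s t. ereal a \<le> s \<Longrightarrow> t \<le> b \<Longrightarrow> detOm h1 h2 h3 s t = \<Delta> s t"
  shows "sigma_seq a b h1 h2 h3 c r j = \<sigma> j"
proof (induction j)
  case (Suc j)
  have "(\<lambda>x. \<sigma> j < ereal x \<and> ereal x < b \<and> detOm h1 h2 h3 (\<sigma> j) (ereal x) = c / r\<^sup>2)
      = (\<lambda>x. \<sigma> j < ereal x \<and> ereal x < b \<and> \<Delta> (\<sigma> j) (ereal x) = c / r\<^sup>2)"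
    using assms sigma_bounds(1)[of j] by (auto simp: fun_eq_iff less_imp_le)
  moreover have "detOm h1 h2 h3 (\<sigma> j) b = \<Delta> (\<sigma> j) b"
    using assms sigma_bounds(1)[of j] by simp
  ultimately show ?case
    using Suc.IH by (simp add: sigma_seq.simps(2) Let_def)
qed simp

lemma kappaH_cong:
  assumes "\<And>s t. ereal a \<le> s \<Longrightarrow> t \<le> b \<Longrightarrow> detOm h1 h2 h3 s t = \<Delta> s t"
  shows "kappaH a b h1 h2 h3 c r = \<kappa>"
  using sigma_seq_cong[OF assms] by (simp add: kappaH_def)

lemma kernelH_cong:
  assumes omega_eq: "\<And>s t. ereal a \<le> s \<Longrightarrow> t \<le> b \<Longrightarrow>
      omg h1 s t = \<omega>\<^sub>1 s t \<and> omg h2 s t = \<omega>\<^sub>2 s t \<and> omg h3 s t = \<omega>\<^sub>3 s t"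
    and "t \<in> hdom a b" "h1 t = k1 t"
  shows "kernelH a b h1 h2 h3 c t r = K t"
proof -
  have t: "a < t" "ereal t < b"
    using assms(2) by (simp_all add: hdom_def)
  have det_eq: "detOm h1 h2 h3 s t' = \<Delta> s t'" if "ereal a \<le> s" "t' \<le> b" for s t'
    using omega_eq[OF that] by (simp add: detOm_def)
  have "that_fn a b h1 h2 h3 c r = t_hat"
    unfolding that_fn_def using det_eq
    by (intro arg_cong[where f = The]) (auto simp: fun_eq_iff less_imp_le)
  moreover have "shat_fn a h1 h2 h3 c t r = s_hat t"
    unfolding shat_fn_def using det_eq t
    by (intro arg_cong[where f = The]) (auto simp: fun_eq_iff less_imp_le)
  moreover have "a \<le> s_hat t" if "\<not> t < t_hat"
    using s_hat(1) that t by simp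
  ultimately show ?thesis
    using omega_eq t assms(3) by (auto simp: kernelH_def less_imp_le)
qed

lemma kernel_integral_bounds_cong:
  assumes omega_eq: "\<And>s t. ereal a \<le> s \<Longrightarrow> t \<le> b \<Longrightarrow>
      omg h1 s t = \<omega>\<^sub>1 s t \<and> omg h2 s t = \<omega>\<^sub>2 s t \<and> omg h3 s t = \<omega>\<^sub>3 s t"
    and h1_eq: "\<And>t. t \<in> hdom a b \<Longrightarrow> h1 t = k1 t"
  shows "ennreal (real (kappaH a b h1 h2 h3 c r) * ln 2
            - (ln r + ln (2 * (omg h1 (ereal a) b + omg h2 (ereal a) b) / sqrt c)))
           \<le> (\<integral>\<^sup>+ t\<in>hdom a b. ennreal (kernelH a b h1 h2 h3 c t r) \<partial>lborel)
       \<and> (\<integral>\<^sup>+ t\<in>hdom a b. ennreal (kernelH a b h1 h2 h3 c t r) \<partial>lborel)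
           \<le> ennreal (2 * exp 1 * real (kappaH a b h1 h2 h3 c r)
            * (ln r + ln ((omg h1 (ereal a) b + omg h2 (ereal a) b) / (2 * sqrt c)) + 1))"
proof -
  have "(\<integral>\<^sup>+t\<in>hdom a b. ennreal (kernelH a b h1 h2 h3 c t r) \<partial>lborel)
      = (\<integral>\<^sup>+u\<in>einterval a b. ennreal (K u) \<partial>lborel)"
    using kernelH_cong[OF omega_eq _ h1_eq]
    by (intro nn_integral_cong) (simp add: hdom_eq_einterval split: split_indicator)
  moreover have "kappaH a b h1 h2 h3 c r = \<kappa>"
    using omega_eq by (intro kappaH_cong) (simp add: detOm_def)
  moreover have "omg h1 (ereal a) b + omg h2 (ereal a) b = tr\<Omega>"
    using omega_eq by (simp add: tr\<Omega>_def)
  ultimately show ?thesis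
    using kernel_integral_lower kernel_integral_upper by simp
qed

end

lemma less_of_sqrt_less:
  fixes c d r :: real
  assumes "0 < c" "0 < d" "sqrt (c / d) < r"
  shows "0 < r" "c / r\<^sup>2 < d"
proof -
  have "0 < sqrt (c / d)"
    using assms by simp
  then show "0 < r"
    using assms(3) by linarith
  have "(sqrt (c / d))\<^sup>2 < r\<^sup>2"
    using assms(3) \<open>0 < sqrt (c / d)\<close> by (intro power_strict_mono) auto
  then have "c / d < r\<^sup>2"
    using assms by simp
  then show "c / r\<^sup>2 < d"
    using assms \<open>0 < r\<close> by (simp add: field_simps)
qed

theorem theorem5p3:
  fixes a c r :: real and b :: ereal and h1 h2 h3 :: "real \<Rightarrow> real"
  assumes "is_hamiltonian a b h1 h2 h3"
    and "definite_ham a b h1 h2 h3"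
    and "limit_circle a b h1 h2"
    and "c > 0"
    and "r > sqrt (c / detOm h1 h2 h3 (ereal a) b)"
  shows "ennreal (real (kappaH a b h1 h2 h3 c r) * ln 2
            - (ln r + ln (2 * (omg h1 (ereal a) b + omg h2 (ereal a) b) / sqrt c)))
           \<le> (\<integral>\<^sup>+ t\<in>hdom a b. ennreal (kernelH a b h1 h2 h3 c t r) \<partial>lborel)
       \<and> (\<integral>\<^sup>+ t\<in>hdom a b. ennreal (kernelH a b h1 h2 h3 c t r) \<partial>lborel)
           \<le> ennreal (2 * exp 1 * real (kappaH a b h1 h2 h3 c r)
            * (ln r + ln ((omg h1 (ereal a) b + omg h2 (ereal a) b) / (2 * sqrt c)) + 1))"
proof -
  define k1 where "k1 = (\<lambda>x. indicator (hdom a b) x * h1 x)"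
  define k2 where "k2 = (\<lambda>x. indicator (hdom a b) x * h2 x)"
  define k3 where "k3 = (\<lambda>x. indicator (hdom a b) x * h3 x)"
  interpret integrable_hamiltonian a b k1 k2 k3
    unfolding k1_def k2_def k3_def using assms(1,3) by (rule integrable_hamiltonian_restrict)
  have omega_eq: "omg h1 s t = \<omega>\<^sub>1 s t \<and> omg h2 s t = \<omega>\<^sub>2 s t \<and> omg h3 s t = \<omega>\<^sub>3 s t"
    if "ereal a \<le> s" "t \<le> b" for s t
    using that by (simp add: k1_def k2_def k3_def omg_restrict)
  have "0 < \<Delta> (ereal a) b"
    using det_pos_if_definite assms(2) definite_ham_restrict by (simp add: k1_def k2_def k3_def)
  moreover have "detOm h1 h2 h3 (ereal a) b = \<Delta> (ereal a) b"
    using omega_eq[of "ereal a" b] by (simp add: detOm_def)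
  ultimately have "0 < r" "c / r\<^sup>2 < \<Delta> (ereal a) b"
    using less_of_sqrt_less[OF assms(4)] assms(5) by simp_all
  with assms(4) interpret hamiltonian_partition a b k1 k2 k3 c r
    by unfold_locales
  have "h1 t = k1 t" if "t \<in> hdom a b" for t
    using that by (simp add: k1_def)
  with omega_eq show ?thesis
    by (rule kernel_integral_bounds_cong)
qed

end
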